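(* Let $r\in(0,1/2)$ and consider the independent-coding distributed delay diversity scheme described in the context, with fixed deterministic delays and relative delay $T_0=|\tau_2-\tau_1|$. Let $P(\mathrm{SNR})=\Pr[I_{TDA}<R,\ |\mathcal D(s)|=2]$. (a) If $T_0B_w>2$ and $T_0B_w$ is not an integer, then there exist constants $c_1,c_2>0$ and $\mathrm{SNR}_0$ such that for all $\mathrm{SNR}\ge\mathrm{SNR}_0$, $$c_1\,\widetilde{\mathrm{SNR}}^{-(3-4r)}\le P(\mathrm{SNR})\le c_2\,\widetilde{\mathrm{SNR}}^{-(3-6r)}.$$ (b) If $T_0B_w$ is a positive integer, then there exist constants $c_1,c_2>0$ and $\mathrm{SNR}_0$ such that for all $\mathrm{SNR}\ge\mathrm{SNR}_0$, $$c_1\,\widetilde{\mathrm{SNR}}^{-(3-4r)}\le P(\mathrm{SNR})\le c_2\,\widetilde{\mathrm{SNR}}^{-(3-4r)}.$$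
   Context: Network: a source $N_S$, two relays $N_{R_1},N_{R_2}$ and a destination $N_D$. The gains $\alpha_{i,j}$, $i\in\{S,R_1,R_2\}$, $j\in\{R_1,R_2,D\}$, $i\neq j$, are mutually independent zero-mean circularly symmetric complex Gaussian random variables with variances $\sigma^2_{i,j}>0$. For $\mathrm{SNR}>0$ set $\rho_0=\frac23\mathrm{SNR}$ and $\widetilde{\mathrm{SNR}}=\sigma^2_{S,D}\mathrm{SNR}$. The target rate is $R=r\log(1+\mathrm{SNR}\,\sigma^2_{S,D})$. Relay $R_k$ belongs to the decoding set $\mathcal D(s)$ iff $\frac12\log(1+\rho_0|\alpha_{S,R_k}|^2)\ge R$. Independent-coding distributed delay diversity scheme: - Signals have baseband bandwidth $B_w>0$. - In phase 2 all successful relays send the same Gaussian codeword, independent of the source codeword. - The signal from relay $R_k$ reaches $N_D$ with deterministic delay $\tau_k\ge0$. - Conditioned on $\mathcal D(s)$, the mutual information is $$I_{TDA}=\frac12\log(1+\rho_0|\alpha_{S,D}|^2)+\frac{1}{2B_w}\int_{-B_w/2}^{B_w/2}\log\left(1+\rho_0\Big|\sum_{R_k\in\mathcal D(s)}\alpha_{R_k,D}e^{j2\pi f\tau_k}\Big|^2\right)df,$$ where an empty sum equals $0$. *)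

theory Defs
  imports "HOL-Probability.Probability"
begin

datatype node = S | R1 | R2 | D

definition links :: "(node \<times> node) set" where
  "links = {(i, j). i \<in> {S, R1, R2} \<and> j \<in> {R1, R2, D} \<and> i \<noteq> j}"

text \<open>Density (w.r.t. Lebesgue measure on the complex plane) of a zero-mean
circularly symmetric complex Gaussian with variance s.\<close>
definition cgauss_density :: "real \<Rightarrow> complex \<Rightarrow> ennreal" where
  "cgauss_density s z = ennreal (exp (- (cmod z)\<^sup>2 / s) / (pi * s))"

definition rho0 :: "real \<Rightarrow> real" where
  "rho0 snr = 2 / 3 * snr"

text \<open>Target rate R = r log(1 + SNR sigma_SD^2) (natural logarithm used throughout;
the base is irrelevant since the same base is used everywhere).\<close>
definition rate :: "real \<Rightarrow> real \<Rightarrow> real \<Rightarrow> real" where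
  "rate r sSD snr = r * ln (1 + snr * sSD)"

definition decodes :: "real \<Rightarrow> real \<Rightarrow> complex \<Rightarrow> bool" where
  "decodes snr R a \<longleftrightarrow> ln (1 + rho0 snr * (cmod a)\<^sup>2) / 2 \<ge> R"

text \<open>Mutual information I_TDA of the independent-coding delay diversity scheme,
conditioned on a decoding set Dset (a subset of {R1,R2}); g k is the gain of the
link from relay k to the destination, tau k its delay, Bw the bandwidth.\<close>
definition I_TDA ::
  "real \<Rightarrow> real \<Rightarrow> (node \<Rightarrow> real) \<Rightarrow> node set \<Rightarrow> complex \<Rightarrow> (node \<Rightarrow> complex) \<Rightarrow> real" where
  "I_TDA snr Bw tau Dset aSD g =
     ln (1 + rho0 snr * (cmod aSD)\<^sup>2) / 2
     + integral {- Bw / 2 .. Bw / 2}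
         (\<lambda>f. ln (1 + rho0 snr *
              (cmod (\<Sum>k\<in>Dset. g k * cis (2 * pi * f * tau k)))\<^sup>2)) / (2 * Bw)"

definition decoding_set :: "real \<Rightarrow> real \<Rightarrow> (node \<Rightarrow> complex) \<Rightarrow> node set" where
  "decoding_set snr R h = {k \<in> {R1, R2}. decodes snr R (h k)}"

definition outage_prob ::
  "'a measure \<Rightarrow> (node \<Rightarrow> node \<Rightarrow> 'a \<Rightarrow> complex) \<Rightarrow> (node \<Rightarrow> node \<Rightarrow> real)
    \<Rightarrow> real \<Rightarrow> real \<Rightarrow> (node \<Rightarrow> real) \<Rightarrow> real \<Rightarrow> real" where
  "outage_prob M \<alpha> \<sigma>2 r Bw tau snr =
     (let R = rate r (\<sigma>2 S D) snr;
          Ds = (\<lambda>\<omega>. decoding_set snr R (\<lambda>k. \<alpha> S k \<omega>))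
      in measure M {\<omega> \<in> space M.
           I_TDA snr Bw tau (Ds \<omega>) (\<alpha> S D \<omega>) (\<lambda>k. \<alpha> k D \<omega>) < R
           \<and> card (Ds \<omega>) = 2})"

end

theory Submission
  imports Defs "HOL-Real_Asymp.Real_Asymp"
begin

text \<open>
  Write \<open>\<rho> = \<rho>\<^sub>0\<close>, \<open>Q = e\<^sup>2\<^sup>R = (1 + SNR\<^sub>S\<^sub>D)\<^sup>2\<^sup>r\<close>, \<open>a\<^sub>0\<close> for the direct gain and
  \<open>a\<^sub>1, a\<^sub>2\<close> for the relay-destination gains.

  The analytic core is that, for distinct delays, frequency averaging recovers the stronger
  relay path: the integrand \<open>ln (1 + \<rho>\<bar>a\<^sub>1 e\<^sup>i\<^sup>\<omega>\<^sup>\<tau>\<^sup>1 + a\<^sub>2 e\<^sup>i\<^sup>\<omega>\<^sup>\<tau>\<^sup>2\<bar>\<^sup>2)\<close> only has logarithmic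
  singularities at isolated nulls, which are integrable uniformly, so the integral is at
  least \<open>B ln (1 + \<rho> max \<bar>a\<^sub>k\<bar>\<^sup>2) - C\<close> (lemma freq_gain_lower).  Hence an outage forces
  \<open>(1 + \<rho>\<bar>a\<^sub>0\<bar>\<^sup>2)(1 + \<rho>\<bar>a\<^sub>k\<bar>\<^sup>2) < e\<^sup>C\<^sup>/\<^sup>B Q\<close> for both relays, an event of probability
  \<open>O(Q\<^sup>2/\<rho>\<^sup>3)\<close> by a dyadic decomposition and Gaussian small-ball estimates
  (outage_upper_bound).  Conversely weak direct and relay-destination links together with
  strong source-relay links force an outage, an event of probability \<open>\<Omega>(Q\<^sup>2/\<rho>\<^sup>3)\<close>
  (outage_lower_bound).  As \<open>Q\<^sup>2/\<rho>\<^sup>3\<close> is of order \<open>SNR\<^sup>-\<^sup>(\<^sup>3\<^sup>-\<^sup>4\<^sup>r\<^sup>)\<close>, the outage probability has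
  exactly this order whenever \<open>\<tau>\<^sub>1 \<noteq> \<tau>\<^sub>2\<close> (outage_order_distinct_delays), which yields both
  parts of the theorem; the upper bound claimed in part (a) is a weakening.
\<close>

lemma cos_ge_quadratic: "1 - x\<^sup>2 / 2 \<le> cos (x::real)"
proof -
  have "(\<lambda>y. cos y - 1 + y\<^sup>2 / 2) 0 \<le> (\<lambda>y. cos y - 1 + y\<^sup>2 / 2) \<bar>x\<bar>"
  proof (rule DERIV_nonneg_imp_nondecreasing[of 0 "\<bar>x\<bar>"])
    fix y :: real assume "0 \<le> y"
    then show "\<exists>d. ((\<lambda>y. cos y - 1 + y\<^sup>2 / 2) has_real_derivative d) (at y) \<and> 0 \<le> d"
      using sin_x_le_x[of y] by (intro exI[of _ "y - sin y"]) (auto intro!: derivative_eq_intros)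
  qed simp
  then show ?thesis by simp
qed

lemma sin_ge_cubic:
  assumes "(x::real) \<ge> 0" shows "x - x ^ 3 / 6 \<le> sin x"
proof -
  have "(\<lambda>y. sin y - y + y ^ 3 / 6) 0 \<le> (\<lambda>y. sin y - y + y ^ 3 / 6) x"
  proof (rule DERIV_nonneg_imp_nondecreasing[OF assms])
    fix y :: real
    have "((\<lambda>y. sin y - y + y ^ 3 / 6) has_real_derivative cos y - 1 + y\<^sup>2 / 2) (at y)"
      by (auto intro!: derivative_eq_intros simp: power2_eq_square)
    then show "\<exists>d. ((\<lambda>y. sin y - y + y ^ 3 / 6) has_real_derivative d) (at y) \<and> 0 \<le> d"
      using cos_ge_quadratic[of y] by force
  qed
  then show ?thesis by simp
qed

lemma one_minus_cos_ge:
  assumes "\<bar>v::real\<bar> \<le> pi" shows "v\<^sup>2 / 18 \<le> 1 - cos v"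
proof -
  define u where "u = \<bar>v\<bar> / 2"
  have u0: "u \<ge> 0" and u2: "u \<le> 2" using assms pi_less_4 by (auto simp: u_def)
  have "u ^ 3 \<le> 4 * u"
    using mult_mono[OF u2 u2] u0 by (simp add: power3_eq_cube mult_right_mono)
  then have sin_u: "u / 3 \<le> sin u" using sin_ge_cubic[OF u0] by simp
  have "cos v = cos (2 * u)" unfolding u_def by (cases "v \<ge> 0") auto
  then have "1 - cos v = 2 * (sin u)\<^sup>2" by (simp add: cos_double_sin)
  moreover have "(u / 3)\<^sup>2 \<le> (sin u)\<^sup>2" using sin_u u0 by (intro power_mono) auto
  moreover have "(u / 3)\<^sup>2 = v\<^sup>2 / 36" unfolding u_def by (simp add: power2_eq_square)
  ultimately show ?thesis by simp
qed

text \<open>For \<open>0 \<le> b \<le> 1\<close>, the power gain \<open>\<bar>1 + b e\<^sup>i\<^sup>\<theta>\<bar>\<^sup>2 = 1 + b\<^sup>2 + 2 b cos \<theta>\<close> of two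
  interfering paths is at least half of the gain \<open>1 + cos \<theta>\<close> of two equal paths.\<close>
lemma two_path_gain_ge:
  fixes b co :: real
  assumes "0 \<le> b" "b \<le> 1" "-1 \<le> co" "co \<le> 1"
  shows "(1 + co) / 2 \<le> 1 + b\<^sup>2 + 2 * b * co"
proof -
  have eq: "1 + b\<^sup>2 + 2 * b * co - (1 + co) / 2 = (b + co)\<^sup>2 - (co + 1) * (co - 1/2)"
    by (simp add: power2_eq_square field_simps)
  show ?thesis
  proof (cases "co \<le> 1/2")
    case True
    then have "(co + 1) * (co - 1/2) \<le> 0" using assms by (intro mult_nonneg_nonpos) auto
    then show ?thesis using eq zero_le_power2[of "b + co"] by linarith
  next
    case False
    then have "co\<^sup>2 \<le> (b + co)\<^sup>2" using assms by (intro power_mono) auto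
    moreover have "(co + 1) * (co - 1/2) \<le> co\<^sup>2" using assms by (simp add: power2_eq_square algebra_simps)
    ultimately show ?thesis using eq by linarith
  qed
qed

text \<open>In particular the two-path gain is nonnegative, so the log-gain integrand is defined.\<close>
lemma two_path_gain_nonneg:
  fixes b co :: real
  assumes "0 \<le> b" "b \<le> 1" "-1 \<le> co" "co \<le> 1"
  shows "0 \<le> 1 + b\<^sup>2 + 2 * b * co"
proof -
  have "0 \<le> (1 + co) / 2" using assms(3) by simp
  then show ?thesis using two_path_gain_ge[OF assms] by linarith
qed

lemma norm_one_plus_rcis_sq: "(cmod (1 + of_real B * cis \<psi>))\<^sup>2 = 1 + B\<^sup>2 + 2 * B * cos \<psi>"
proof -
  have "(cmod (1 + of_real B * cis \<psi>))\<^sup>2 = (1 + B * cos \<psi>)\<^sup>2 + B\<^sup>2 * (sin \<psi>)\<^sup>2"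
    by (simp add: cmod_power2 power_mult_distrib)
  also have "B\<^sup>2 * (sin \<psi>)\<^sup>2 = B\<^sup>2 - B\<^sup>2 * (cos \<psi>)\<^sup>2" by (simp add: sin_squared_eq algebra_simps)
  finally show ?thesis by (simp add: power2_eq_square algebra_simps)
qed

lemma two_path_decomp:
  fixes u v :: complex and a a' :: real
  assumes u: "u \<noteq> 0"
  shows "(cmod (u * cis a + v * cis a'))\<^sup>2 =
     (cmod u)\<^sup>2 * (1 + (cmod (v / u))\<^sup>2 + 2 * cmod (v / u) * cos (Arg (v / u) + (a' - a)))"
proof -
  define w where "w = v / u"
  have "w * cis (a' - a) = of_real (cmod w) * cis (Arg w + (a' - a))"
  proof -
    have "w = of_real (cmod w) * cis (Arg w)" using rcis_cmod_Arg[of w] by (simp add: rcis_def)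
    then show ?thesis by (metis cis_mult mult.assoc)
  qed
  moreover have "u * cis a + v * cis a' = u * cis a * (1 + w * cis (a' - a))"
    using u unfolding w_def by (simp add: field_simps cis_divide[symmetric] cis_mult)
  ultimately have "cmod (u * cis a + v * cis a') =
      cmod u * cmod (1 + of_real (cmod w) * cis (Arg w + (a' - a)))"
    by (simp add: norm_mult)
  then show ?thesis unfolding w_def
    by (simp add: power_mult_distrib norm_one_plus_rcis_sq)
qed


section \<open>Integrability of logarithmic singularities\<close>

text \<open>A primitive of the truncated logarithmic singularity \<open>v \<mapsto> min 0 (ln \<bar>v\<bar>)\<close>; it is
  continuous everywhere and bounded by 1, so the singularity has integral at least \<open>-2\<close>
  over every interval, however the interval sits relative to the singular point.\<close>
definition log_sing_primitive :: "real \<Rightarrow> real" where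
  "log_sing_primitive v = v * min 0 (ln \<bar>v\<bar>) - max (-1) (min 1 v)"

text \<open>Continuity at \<open>0\<close> rests on \<open>v ln \<bar>v\<bar> \<rightarrow> 0\<close>.\<close>
lemma log_sing_primitive_cont: "isCont log_sing_primitive v"
proof (cases "v = 0")
  case True
  have "((\<lambda>v::real. v * ln \<bar>v\<bar>) \<longlongrightarrow> 0) (at_right 0)"
       "((\<lambda>v::real. v * ln \<bar>v\<bar>) \<longlongrightarrow> 0) (at_left 0)" by real_asymp+
  then have xlnx: "((\<lambda>v::real. v * ln \<bar>v\<bar>) \<longlongrightarrow> 0) (at 0)" by (simp add: filterlim_split_at)
  have "norm (x * min 0 (ln \<bar>x\<bar>)) \<le> norm (x * ln \<bar>x\<bar>) * 1" for x :: real
  proof -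
    have "\<bar>x\<bar> * \<bar>min 0 (ln \<bar>x\<bar>)\<bar> \<le> \<bar>x\<bar> * \<bar>ln \<bar>x\<bar>\<bar>" by (intro mult_left_mono) auto
    then show ?thesis by (simp add: abs_mult)
  qed
  then have "((\<lambda>v::real. v * min 0 (ln \<bar>v\<bar>)) \<longlongrightarrow> 0) (at 0)"
    by (intro tendsto_0_le[OF xlnx always_eventually, where K = 1]) blast
  moreover have "isCont (\<lambda>v::real. max (-1) (min 1 v)) 0" by (intro continuous_intros)
  ultimately have "((\<lambda>v::real. v * min 0 (ln \<bar>v\<bar>) - max (-1) (min 1 v)) \<longlongrightarrow> 0 - max (-1) (min 1 0)) (at 0)"
    by (intro tendsto_diff) (auto simp: isCont_def)
  then show ?thesis using True unfolding isCont_def log_sing_primitive_def by simp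
next
  case False
  then show ?thesis unfolding log_sing_primitive_def by (intro continuous_intros) auto
qed

lemma log_sing_primitive_deriv:
  assumes "v \<notin> {-1, 0, 1}"
  shows "(log_sing_primitive has_real_derivative min 0 (ln \<bar>v\<bar>)) (at v)"
proof -
  have piece: "(log_sing_primitive has_real_derivative min 0 (ln \<bar>v\<bar>)) (at v)"
    if "open U" "v \<in> U" "(g has_real_derivative min 0 (ln \<bar>v\<bar>)) (at v)"
       "\<And>x. x \<in> U \<Longrightarrow> g x = log_sing_primitive x" for g U
    using has_field_derivative_transform_within_open[OF that(3,1,2)] that(4) by simp
  consider "v < -1" | "-1 < v" "v < 0" | "0 < v" "v < 1" | "1 < v" using assms by force
  then show ?thesis
  proof cases
    case 1
    show ?thesis
      by (rule piece[of "{..<-1}" "\<lambda>_. 1"]) (use 1 in \<open>auto simp: log_sing_primitive_def\<close>)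
  next
    case 2
    show ?thesis
      by (rule piece[of "{-1<..<0}" "\<lambda>v. v * ln (- v) - v"])
         (use 2 in \<open>auto intro!: derivative_eq_intros simp: log_sing_primitive_def field_simps\<close>)
  next
    case 3
    show ?thesis
      by (rule piece[of "{0<..<1}" "\<lambda>v. v * ln v - v"])
         (use 3 in \<open>auto intro!: derivative_eq_intros simp: log_sing_primitive_def field_simps\<close>)
  next
    case 4
    show ?thesis
      by (rule piece[of "{1<..}" "\<lambda>_. -1"]) (use 4 in \<open>auto simp: log_sing_primitive_def\<close>)
  qed
qed

lemma log_sing_primitive_bound: "\<bar>log_sing_primitive v\<bar> \<le> 1"
proof -
  text \<open>The key estimate \<open>0 \<le> -w ln w \<le> 1 - w\<close> on \<open>(0,1)\<close>.\<close>
  have key: "w - w * ln w \<le> 1" if "0 < w" for w :: real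
  proof -
    have "ln (1 / w) \<le> 1 / w - 1" using that by (intro ln_le_minus_one) auto
    then have "w * (- ln w) \<le> w * (1 / w - 1)" using that by (intro mult_left_mono) (auto simp: ln_div)
    then show ?thesis using that by (simp add: algebra_simps)
  qed
  consider "v \<le> -1" | "-1 < v" "v < 0" | "v = 0" | "0 < v" "v < 1" | "1 \<le> v" by force
  then show ?thesis
  proof cases
    case 2
    then have "v * ln (- v) \<ge> 0" by (intro mult_nonpos_nonpos) auto
    then show ?thesis using 2 key[of "- v"] by (auto simp: log_sing_primitive_def abs_if min_def max_def)
  next
    case 4
    then have "v * ln v \<le> 0" by (intro mult_nonneg_nonpos) auto
    then show ?thesis using 4 key[of v] by (auto simp: log_sing_primitive_def abs_if min_def max_def)
  qed (auto simp: log_sing_primitive_def min_def max_def)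
qed

text \<open>Fundamental theorem of calculus, with the three kinks of the primitive as exceptional points.\<close>
lemma log_sing_has_integral:
  assumes "(a::real) \<le> b"
  shows "((\<lambda>f. min 0 (ln \<bar>f - z\<bar>)) has_integral
           (log_sing_primitive (b - z) - log_sing_primitive (a - z))) {a..b}"
proof -
  have "((\<lambda>f. min 0 (ln \<bar>f - z\<bar>)) has_integral
          ((\<lambda>f. log_sing_primitive (f - z)) b - (\<lambda>f. log_sing_primitive (f - z)) a)) {a..b}"
  proof (rule fundamental_theorem_of_calculus_strong[where S = "{z - 1, z, z + 1}"])
    have "continuous_on UNIV log_sing_primitive"
      by (intro continuous_at_imp_continuous_on ballI log_sing_primitive_cont)
    then show "continuous_on {a..b} (\<lambda>f. log_sing_primitive (f - z))"
      by (rule continuous_on_compose2) (auto intro!: continuous_intros)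
  next
    fix x assume "x \<in> {a..b} - {z - 1, z, z + 1}"
    then have "x - z \<notin> {-1, 0, 1}" by auto
    from log_sing_primitive_deriv[OF this]
    have "((\<lambda>f. log_sing_primitive (f - z)) has_real_derivative min 0 (ln \<bar>x - z\<bar>) * 1) (at x)"
      by (intro DERIV_chain2[of log_sing_primitive]) (auto intro!: derivative_eq_intros)
    then show "((\<lambda>f. log_sing_primitive (f - z)) has_vector_derivative min 0 (ln \<bar>x - z\<bar>)) (at x)"
      by (auto intro!: derivative_eq_intros simp: has_real_derivative_iff_has_vector_derivative)
  qed (use assms in auto)
  then show ?thesis by simp
qed

lemma log_sing_sum_integral:
  assumes "finite W" "(a::real) \<le> b"
  shows "(\<lambda>f. \<Sum>m\<in>W. min 0 (ln \<bar>f - z m\<bar>)) integrable_on {a..b}"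
    and "- 2 * real (card W) \<le> integral {a..b} (\<lambda>f. \<Sum>m\<in>W. min 0 (ln \<bar>f - z m\<bar>))"
proof -
  have int: "(\<lambda>f. min 0 (ln \<bar>f - z m\<bar>)) integrable_on {a..b}"
    and ge: "-2 \<le> integral {a..b} (\<lambda>f. min 0 (ln \<bar>f - z m\<bar>))" for m
    using log_sing_has_integral[OF assms(2), of "z m"]
      log_sing_primitive_bound[of "b - z m"] log_sing_primitive_bound[of "a - z m"]
    by (auto simp: has_integral_iff abs_le_iff)
  show "(\<lambda>f. \<Sum>m\<in>W. min 0 (ln \<bar>f - z m\<bar>)) integrable_on {a..b}"
    by (rule integrable_sum[OF assms(1) int])
  have "(\<Sum>m\<in>W. -2) \<le> (\<Sum>m\<in>W. integral {a..b} (\<lambda>f. min 0 (ln \<bar>f - z m\<bar>)))"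
    by (intro sum_mono ge)
  then show "- 2 * real (card W) \<le> integral {a..b} (\<lambda>f. \<Sum>m\<in>W. min 0 (ln \<bar>f - z m\<bar>))"
    by (simp add: integral_sum[OF assms(1) int] mult.commute)
qed

lemma integral_le_off_finite:
  fixes g h :: "real \<Rightarrow> real"
  assumes "finite F" "g integrable_on I" "h integrable_on I"
    and "\<And>x. x \<in> I - F \<Longrightarrow> g x \<le> h x"
  shows "integral I g \<le> integral I h"
proof -
  define g' where "g' x = (if x \<in> F then h x else g x)" for x
  have "g' integrable_on I" "integral I g' = integral I g"
    using integrable_spike_finite[OF assms(1) _ assms(2), of g']
      integral_spike[OF negligible_finite[OF assms(1)], of I g' g]
    by (auto simp: g'_def)
  moreover have "integral I g' \<le> integral I h"
    by (rule integral_le[OF \<open>g' integrable_on I\<close> assms(3)]) (use assms(4) in \<open>auto simp: g'_def\<close>)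
  ultimately show ?thesis by simp
qed


section \<open>Frequency averaging of a two-path channel\<close>

text \<open>The two-path power gain \<open>1 + b\<^sup>2 + 2 b cos \<theta>\<close> vanishes only when \<open>b = 1\<close> and \<open>\<theta>\<close> is an
  odd multiple of \<open>\<pi>\<close>.\<close>
lemma nearest_null:
  obtains m :: int where "\<bar>\<theta> - pi - 2 * pi * of_int m\<bar> \<le> pi"
proof
  define x where "x = (\<theta> - pi) / (2 * pi)"
  have "of_int \<lfloor>x + 1/2\<rfloor> \<le> x + 1/2" "x + 1/2 < of_int \<lfloor>x + 1/2\<rfloor> + 1" by linarith+
  then have "2 * pi * of_int \<lfloor>x + 1/2\<rfloor> \<le> 2 * pi * (x + 1/2)"
    "2 * pi * (x + 1/2) \<le> 2 * pi * (of_int \<lfloor>x + 1/2\<rfloor> + 1)"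
    by (intro mult_left_mono; simp)+
  moreover have "2 * pi * x = \<theta> - pi" unfolding x_def by simp
  ultimately show "\<bar>\<theta> - pi - 2 * pi * of_int \<lfloor>x + 1/2\<rfloor>\<bar> \<le> pi"
    by (simp add: algebra_simps)
qed

definition null_indices :: "real \<Rightarrow> real \<Rightarrow> int set" where
  "null_indices L \<phi> = {m. \<bar>pi + 2 * pi * of_int m - \<phi>\<bar> \<le> L}"

lemma null_indices_finite_card:
  assumes "L \<ge> 0"
  shows "finite (null_indices L \<phi>)" and "real (card (null_indices L \<phi>)) \<le> L / pi + 1"
proof -
  define lo where "lo = (\<phi> - pi - L) / (2 * pi)"
  define hi where "hi = (\<phi> - pi + L) / (2 * pi)"
  have sub: "null_indices L \<phi> \<subseteq> {\<lceil>lo\<rceil>..\<lfloor>hi\<rfloor>}"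
  proof
    fix m assume "m \<in> null_indices L \<phi>"
    then have "\<phi> - pi - L \<le> 2 * pi * of_int m" "2 * pi * of_int m \<le> \<phi> - pi + L"
      unfolding null_indices_def by auto
    then have "lo \<le> of_int m" "of_int m \<le> hi"
      unfolding lo_def hi_def by (simp_all add: divide_le_eq le_divide_eq mult.commute)
    then show "m \<in> {\<lceil>lo\<rceil>..\<lfloor>hi\<rfloor>}" by (simp add: ceiling_le le_floor_iff)
  qed
  then show "finite (null_indices L \<phi>)" using finite_subset by blast
  have "real (card (null_indices L \<phi>)) \<le> real (nat (\<lfloor>hi\<rfloor> - \<lceil>lo\<rceil> + 1))"
    using card_mono[OF _ sub] by simp
  also have "\<dots> \<le> hi - lo + 1"
  proof (cases "\<lfloor>hi\<rfloor> - \<lceil>lo\<rceil> + 1 \<ge> 0")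
    case True
    then have "real (nat (\<lfloor>hi\<rfloor> - \<lceil>lo\<rceil> + 1)) = of_int \<lfloor>hi\<rfloor> - of_int \<lceil>lo\<rceil> + 1" by simp
    then show ?thesis using of_int_floor_le[of hi] le_of_int_ceiling[of lo] by linarith
  next
    case False
    have "lo \<le> hi" unfolding lo_def hi_def using assms by (simp add: divide_right_mono)
    with False show ?thesis by simp
  qed
  also have "hi - lo = L / pi" unfolding hi_def lo_def by (simp add: field_simps)
  finally show "real (card (null_indices L \<phi>)) \<le> L / pi + 1" .
qed

lemma log_gain_near_null:
  fixes A b c f \<phi> :: real and m :: int
  assumes A: "A \<ge> 0" and b: "0 \<le> b" "b \<le> 1" and c: "c \<noteq> 0"
    and near: "\<bar>\<phi> + c * f - pi - 2 * pi * of_int m\<bar> \<le> pi"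
    and off: "f \<noteq> (pi + 2 * pi * of_int m - \<phi>) / c"
  shows "ln (1 + A) + ln (c\<^sup>2 / 36) + 2 * ln \<bar>f - (pi + 2 * pi * of_int m - \<phi>) / c\<bar>
           \<le> ln (1 + A * (1 + b\<^sup>2 + 2 * b * cos (\<phi> + c * f)))"
proof -
  define d where "d = f - (pi + 2 * pi * of_int m - \<phi>) / c"
  define v where "v = \<phi> + c * f - pi - 2 * pi * of_int m"
  have vd: "v = c * d" and d0: "d \<noteq> 0" using c off unfolding v_def d_def by (auto simp: field_simps)
  have "cos (\<phi> + c * f) = cos (v + pi + 2 * pi * of_int m)" unfolding v_def by simp
  also have "\<dots> = - cos v" by (simp add: cos_add sin_add)
  finally have "v\<^sup>2 / 18 \<le> 1 + cos (\<phi> + c * f)" using one_minus_cos_ge[of v] near v_def by simp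
  then have gain: "v\<^sup>2 / 36 \<le> 1 + b\<^sup>2 + 2 * b * cos (\<phi> + c * f)"
    using two_path_gain_ge[OF b, of "cos (\<phi> + c * f)"] by simp
  have "v\<^sup>2 \<le> 4\<^sup>2"
    using power_mono[of "\<bar>v\<bar>" 4 2] near pi_less_4 unfolding v_def by simp
  moreover have "A * (v\<^sup>2 / 36) \<le> A * (1 + b\<^sup>2 + 2 * b * cos (\<phi> + c * f))"
    by (rule mult_left_mono[OF gain A])
  ultimately have "(1 + A) * (v\<^sup>2 / 36) \<le> 1 + A * (1 + b\<^sup>2 + 2 * b * cos (\<phi> + c * f))"
    by (simp add: algebra_simps)
  moreover have pos: "0 < 1 + A" "0 < c\<^sup>2 / 36" "0 < \<bar>d\<bar>\<^sup>2" using A c d0 by auto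
  ultimately have "ln ((1 + A) * (c\<^sup>2 / 36) * \<bar>d\<bar>\<^sup>2) \<le> ln (1 + A * (1 + b\<^sup>2 + 2 * b * cos (\<phi> + c * f)))"
    unfolding vd by (intro ln_mono) (auto simp: power_mult_distrib)
  moreover have "ln ((1 + A) * (c\<^sup>2 / 36) * \<bar>d\<bar>\<^sup>2) = ln (1 + A) + ln (c\<^sup>2 / 36) + 2 * ln \<bar>d\<bar>"
    using pos d0 by (simp only: ln_mult_pos mult_pos_pos ln_realpow zero_less_abs_iff)
  ultimately show ?thesis unfolding d_def by simp
qed

text \<open>Summing the singularities over all nulls reachable from the band \<open>\<bar>f\<bar> \<le> B/2\<close>
  gives a lower bound for the log-gain that no longer depends on which null is nearest.\<close>
lemma log_gain_ge_null_sum: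
  fixes A b c f \<phi> B :: real
  defines "L \<equiv> \<bar>c\<bar> * B / 2 + pi"
    and "null \<equiv> \<lambda>m::int. (pi + 2 * pi * of_int m - \<phi>) / c"
  assumes A: "A \<ge> 0" and b: "0 \<le> b" "b \<le> 1" and c: "c \<noteq> 0"
    and f: "\<bar>f\<bar> \<le> B / 2" "f \<notin> null ` null_indices L \<phi>"
  shows "ln (1 + A) + ln (c\<^sup>2 / 36) + 2 * (\<Sum>m\<in>null_indices L \<phi>. min 0 (ln \<bar>f - null m\<bar>))
           \<le> ln (1 + A * (1 + b\<^sup>2 + 2 * b * cos (\<phi> + c * f)))"
proof -
  obtain m where m: "\<bar>\<phi> + c * f - pi - 2 * pi * of_int m\<bar> \<le> pi" using nearest_null by blast
  have "\<bar>c * f\<bar> \<le> \<bar>c\<bar> * (B / 2)" using mult_left_mono[OF f(1) abs_ge_zero[of c]] by (simp add: abs_mult)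
  then have "\<bar>pi + 2 * pi * of_int m - \<phi>\<bar> \<le> L" using m unfolding L_def by linarith
  then have mW: "m \<in> null_indices L \<phi>" unfolding null_indices_def by simp
  have "0 \<le> L" using f(1) unfolding L_def by simp
  then have fin: "finite (null_indices L \<phi>)" by (rule null_indices_finite_card)
  have "(\<Sum>m'\<in>null_indices L \<phi>. min 0 (ln \<bar>f - null m'\<bar>))
      = min 0 (ln \<bar>f - null m\<bar>) + (\<Sum>m'\<in>null_indices L \<phi> - {m}. min 0 (ln \<bar>f - null m'\<bar>))"
    using fin mW by (simp add: sum.remove)
  moreover have "(\<Sum>m'\<in>null_indices L \<phi> - {m}. min 0 (ln \<bar>f - null m'\<bar>)) \<le> 0"
    by (intro sum_nonpos) simp
  ultimately have "(\<Sum>m'\<in>null_indices L \<phi>. min 0 (ln \<bar>f - null m'\<bar>)) \<le> ln \<bar>f - null m\<bar>"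
    using min.cobounded2[of 0 "ln \<bar>f - null m\<bar>"] by linarith
  then show ?thesis
    using log_gain_near_null[OF A b c m] f(2) mW unfolding null_def by force
qed

text \<open>The key analytic estimate: averaged over a band of width \<open>B\<close>, the log-gain of a
  two-path channel whose phase rotates with nonzero speed \<open>c\<close> is as good as that of a single
  path of the stronger gain, up to a constant independent of the SNR \<open>A\<close>, the relative
  amplitude \<open>b\<close> and the phase offset \<open>\<phi>\<close>.\<close>
lemma cos_channel_integral_lower:
  fixes B c :: real
  assumes B: "B > 0" and c: "c \<noteq> 0"
  obtains C where "C \<ge> 0"
    and "\<And>A \<phi> b. A \<ge> 0 \<Longrightarrow> 0 \<le> b \<Longrightarrow> b \<le> 1 \<Longrightarrow>
       B * ln (1 + A) - C \<le> integral {-B/2..B/2} (\<lambda>f. ln (1 + A * (1 + b\<^sup>2 + 2 * b * cos (\<phi> + c * f))))"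
proof
  define L where "L = \<bar>c\<bar> * B / 2 + pi"
  define K where "K = ln (c\<^sup>2 / 36)"
  show "0 \<le> B * \<bar>K\<bar> + 4 * (L / pi + 1)" unfolding L_def using B by simp
  fix A \<phi> b :: real assume A: "A \<ge> 0" and b: "0 \<le> b" "b \<le> 1"
  define null where "null m = (pi + 2 * pi * of_int m - \<phi>) / c" for m :: int
  define W where "W = null_indices L \<phi>"
  define low where "low f = ln (1 + A) + K + 2 * (\<Sum>m\<in>W. min 0 (ln \<bar>f - null m\<bar>))" for f
  define gain where "gain f = ln (1 + A * (1 + b\<^sup>2 + 2 * b * cos (\<phi> + c * f)))" for f
  have L0: "L \<ge> 0" unfolding L_def using B by simp
  note finW = null_indices_finite_card(1)[OF L0, of \<phi>, folded W_def]
  have sing: "(\<lambda>f. \<Sum>m\<in>W. min 0 (ln \<bar>f - null m\<bar>)) integrable_on {-B/2..B/2}"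
    "- 2 * real (card W) \<le> integral {-B/2..B/2} (\<lambda>f. \<Sum>m\<in>W. min 0 (ln \<bar>f - null m\<bar>))"
    using log_sing_sum_integral[OF finW, of "-B/2" "B/2" null] B by auto
  have low_int: "low integrable_on {-B/2..B/2}"
    unfolding low_def using sing(1) by (intro integrable_add integrable_const_ivl integrable_on_mult_right)
  have "integral {-B/2..B/2} low = B * (ln (1 + A) + K) + 2 * integral {-B/2..B/2} (\<lambda>f. \<Sum>m\<in>W. min 0 (ln \<bar>f - null m\<bar>))"
    unfolding low_def using B sing(1)
    by (subst integral_add) (auto intro: integrable_on_mult_right)
  moreover have "4 * real (card W) \<le> 4 * (L / pi + 1)"
    using null_indices_finite_card(2)[OF L0, of \<phi>, folded W_def] by simp
  ultimately have "B * (ln (1 + A) + K) - 4 * (L / pi + 1) \<le> integral {-B/2..B/2} low"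
    using sing(2) by linarith
  moreover have gain_pos: "0 < 1 + A * (1 + b\<^sup>2 + 2 * b * cos (\<phi> + c * f))" for f
    using two_path_gain_nonneg[OF b, of "cos (\<phi> + c * f)"] A by (simp add: add_pos_nonneg)
  have "integral {-B/2..B/2} low \<le> integral {-B/2..B/2} gain"
  proof (rule integral_le_off_finite[of "null ` W"])
    show "gain integrable_on {-B/2..B/2}" unfolding gain_def using gain_pos
      by (intro integrable_continuous_interval continuous_intros) (auto simp: less_le)
    show "low x \<le> gain x" if "x \<in> {-B/2..B/2} - null ` W" for x
      using log_gain_ge_null_sum[OF A b c, of x B] that
      unfolding low_def gain_def K_def W_def L_def null_def by auto
  qed (use finW low_int in auto)
  moreover have "B * ln (1 + A) - (B * \<bar>K\<bar>) \<le> B * (ln (1 + A) + K)"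
  proof -
    have "- \<bar>K\<bar> \<le> K" by (simp add: abs_if)
    from mult_left_mono[OF this, of B] B show ?thesis by (simp add: algebra_simps)
  qed
  ultimately show "B * ln (1 + A) - (B * \<bar>K\<bar> + 4 * (L / pi + 1)) \<le> integral {-B/2..B/2} gain"
    by linarith
qed


definition freq_gain :: "real \<Rightarrow> real \<Rightarrow> real \<Rightarrow> real \<Rightarrow> complex \<Rightarrow> complex \<Rightarrow> real" where
  "freq_gain \<rho> B t1 t2 u v = integral {-B/2..B/2}
     (\<lambda>f. ln (1 + \<rho> * (cmod (u * cis (2 * pi * f * t1) + v * cis (2 * pi * f * t2)))\<^sup>2))"

lemma freq_gain_swap: "freq_gain \<rho> B t1 t2 u v = freq_gain \<rho> B t2 t1 v u"
  unfolding freq_gain_def by (simp add: add.commute)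

lemma freq_gain_integrand_pos:
  "\<rho> \<ge> 0 \<Longrightarrow> 0 < 1 + \<rho> * (cmod (u * cis (2 * pi * f * t1) + v * cis (2 * pi * f * t2)))\<^sup>2"
  by (simp add: add_pos_nonneg)

lemma freq_gain_upper:
  assumes \<rho>: "\<rho> \<ge> 0" and B: "B > 0"
  shows "freq_gain \<rho> B t1 t2 u v \<le> B * ln (1 + \<rho> * (cmod u + cmod v)\<^sup>2)"
proof -
  define g where "g f = ln (1 + \<rho> * (cmod (u * cis (2 * pi * f * t1) + v * cis (2 * pi * f * t2)))\<^sup>2)" for f
  have "g f \<le> ln (1 + \<rho> * (cmod u + cmod v)\<^sup>2)" for f
  proof -
    have "cmod (u * cis (2 * pi * f * t1) + v * cis (2 * pi * f * t2)) \<le> cmod u + cmod v"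
      using norm_triangle_ineq[of "u * cis (2 * pi * f * t1)" "v * cis (2 * pi * f * t2)"]
      by (simp add: norm_mult)
    then have "(cmod (u * cis (2 * pi * f * t1) + v * cis (2 * pi * f * t2)))\<^sup>2 \<le> (cmod u + cmod v)\<^sup>2"
      by (intro power_mono) auto
    from mult_left_mono[OF this \<rho>] show ?thesis
      unfolding g_def using freq_gain_integrand_pos[OF \<rho>] by (intro ln_mono) auto
  qed
  moreover have "g integrable_on {-B/2..B/2}"
    unfolding g_def using freq_gain_integrand_pos[OF \<rho>]
    by (intro integrable_continuous_interval continuous_intros) (auto simp: less_le)
  ultimately have "integral {-B/2..B/2} g \<le> integral {-B/2..B/2} (\<lambda>f. ln (1 + \<rho> * (cmod u + cmod v)\<^sup>2))"
    by (intro integral_le integrable_const_ivl) auto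
  then show ?thesis using B unfolding freq_gain_def g_def by simp
qed

text \<open>The gain depends continuously on the pair of path gains (needed for measurability).\<close>
lemma freq_gain_continuous:
  assumes "\<rho> \<ge> 0"
  shows "continuous_on UNIV (\<lambda>p. freq_gain \<rho> B t1 t2 (fst p) (snd p))"
proof -
  have "continuous_on UNIV (\<lambda>p. integral (cbox (-B/2) (B/2))
     (\<lambda>f. ln (1 + \<rho> * (cmod (fst p * cis (2 * pi * f * t1) + snd p * cis (2 * pi * f * t2)))\<^sup>2)))"
  proof (rule integral_continuous_on_param)
    show "continuous_on (UNIV \<times> cbox (-B/2) (B/2)) (\<lambda>(p, f).
       ln (1 + \<rho> * (cmod (fst p * cis (2 * pi * f * t1) + snd p * cis (2 * pi * f * t2)))\<^sup>2))"
      unfolding case_prod_beta using freq_gain_integrand_pos[OF assms]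
      by (intro continuous_intros) (auto simp: less_le)
  qed
  then show ?thesis unfolding freq_gain_def cbox_interval by simp
qed

text \<open>If the second path is the weaker one, the cosine-channel bound applies with relative
  amplitude \<open>\<bar>v/u\<bar> \<le> 1\<close> and SNR \<open>\<rho>\<bar>u\<bar>\<^sup>2\<close>.\<close>
lemma freq_gain_lower_dominant:
  assumes \<rho>: "\<rho> \<ge> 0" and uv: "cmod v \<le> cmod u" and C: "C \<ge> 0"
    and H: "\<And>A \<phi> b. A \<ge> 0 \<Longrightarrow> 0 \<le> b \<Longrightarrow> b \<le> 1 \<Longrightarrow> B * ln (1 + A) - C \<le>
       integral {-B/2..B/2} (\<lambda>f. ln (1 + A * (1 + b\<^sup>2 + 2 * b * cos (\<phi> + (2 * pi * (t2 - t1)) * f))))"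
  shows "B * ln (1 + \<rho> * (cmod u)\<^sup>2) - C \<le> freq_gain \<rho> B t1 t2 u v"
proof (cases "u = 0")
  case True
  then show ?thesis using uv C by (simp add: freq_gain_def)
next
  case False
  define b where "b = cmod (v / u)"
  define \<phi> where "\<phi> = Arg (v / u)"
  have b: "0 \<le> b" "b \<le> 1" unfolding b_def using uv False by (auto simp: norm_divide divide_le_eq_1)
  have "2 * pi * f * t2 - 2 * pi * f * t1 = (2 * pi * (t2 - t1)) * f" for f
    by (simp add: algebra_simps)
  then have "freq_gain \<rho> B t1 t2 u v = integral {-B/2..B/2}
      (\<lambda>f. ln (1 + (\<rho> * (cmod u)\<^sup>2) * (1 + b\<^sup>2 + 2 * b * cos (\<phi> + (2 * pi * (t2 - t1)) * f))))"
    unfolding freq_gain_def two_path_decomp[OF False] b_def \<phi>_def by (simp add: mult.assoc)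
  then show ?thesis using H[of "\<rho> * (cmod u)\<^sup>2" b \<phi>] b \<rho> by simp
qed

text \<open>Distinct delays: the frequency-averaged gain is, up to a constant, that of the
  stronger of the two paths.  This is the diversity gain of the delay scheme.\<close>
lemma freq_gain_lower:
  assumes B: "B > 0" and t: "t1 \<noteq> t2"
  obtains C where "\<And>\<rho> u v. \<rho> \<ge> 0 \<Longrightarrow>
           B * ln (1 + \<rho> * max ((cmod u)\<^sup>2) ((cmod v)\<^sup>2)) - C \<le> freq_gain \<rho> B t1 t2 u v"
proof -
  obtain C1 where C1: "C1 \<ge> 0" "\<And>A \<phi> b. A \<ge> 0 \<Longrightarrow> 0 \<le> b \<Longrightarrow> b \<le> 1 \<Longrightarrow> B * ln (1 + A) - C1 \<le>
     integral {-B/2..B/2} (\<lambda>f. ln (1 + A * (1 + b\<^sup>2 + 2 * b * cos (\<phi> + (2 * pi * (t2 - t1)) * f))))"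
    using cos_channel_integral_lower[OF B, of "2 * pi * (t2 - t1)"] t by auto
  obtain C2 where C2: "C2 \<ge> 0" "\<And>A \<phi> b. A \<ge> 0 \<Longrightarrow> 0 \<le> b \<Longrightarrow> b \<le> 1 \<Longrightarrow> B * ln (1 + A) - C2 \<le>
     integral {-B/2..B/2} (\<lambda>f. ln (1 + A * (1 + b\<^sup>2 + 2 * b * cos (\<phi> + (2 * pi * (t1 - t2)) * f))))"
    using cos_channel_integral_lower[OF B, of "2 * pi * (t1 - t2)"] t by auto
  show ?thesis
  proof
    fix \<rho> :: real and u v :: complex assume \<rho>: "\<rho> \<ge> 0"
    show "B * ln (1 + \<rho> * max ((cmod u)\<^sup>2) ((cmod v)\<^sup>2)) - max C1 C2 \<le> freq_gain \<rho> B t1 t2 u v"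
    proof (cases "cmod v \<le> cmod u")
      case True
      then have "max ((cmod u)\<^sup>2) ((cmod v)\<^sup>2) = (cmod u)\<^sup>2" by (simp add: max_def power_mono)
      then show ?thesis using freq_gain_lower_dominant[OF \<rho> True C1] by simp
    next
      case False
      then have "max ((cmod u)\<^sup>2) ((cmod v)\<^sup>2) = (cmod v)\<^sup>2" by (simp add: max_def power_mono)
      then show ?thesis using freq_gain_lower_dominant[OF \<rho> _ C2, of u v] False
        by (simp add: freq_gain_swap[of \<rho> B t1])
    qed
  qed
qed


section \<open>Small-ball probabilities of circularly symmetric Gaussians\<close>

text \<open>For \<open>X ~ CN(0, s)\<close> the probability \<open>P(\<bar>X\<bar>\<^sup>2 \<le> t)\<close> equals \<open>1 - e\<^sup>-\<^sup>t\<^sup>/\<^sup>s\<close>; we only need that it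
  is of order \<open>t/s\<close>, which follows by comparing the disk \<open>\<bar>z\<bar>\<^sup>2 \<le> t\<close> with an inscribed and a
  circumscribed square on which the density is bounded.\<close>

definition square :: "real \<Rightarrow> complex set" where
  "square a = cbox (Complex (-a) (-a)) (Complex a a)"

lemma sets_disk [measurable]: "{z::complex. (cmod z)\<^sup>2 \<le> t} \<in> sets borel"
  by measurable

lemma nn_integral_square:
  assumes "a \<ge> 0" "c \<ge> 0"
  shows "(\<integral>\<^sup>+z. ennreal c * indicator (square a) z \<partial>lborel) = ennreal (c * (2 * a)\<^sup>2)"
  using assms
  by (simp add: square_def nn_integral_cmult_indicator emeasure_lborel_cbox_eq Basis_complex_def
      power2_eq_square ennreal_mult)

lemma disk_subset_square: "{z. (cmod z)\<^sup>2 \<le> t} \<subseteq> square (sqrt t)"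
proof
  fix z assume "z \<in> {z. (cmod z)\<^sup>2 \<le> t}"
  then have "cmod z \<le> sqrt t" using real_le_rsqrt by auto
  then have "\<bar>Re z\<bar> \<le> sqrt t" "\<bar>Im z\<bar> \<le> sqrt t" using abs_Re_le_cmod[of z] abs_Im_le_cmod[of z] by linarith+
  then show "z \<in> square (sqrt t)" by (auto simp: square_def cbox_def Basis_complex_def)
qed

lemma square_subset_disk:
  assumes "t \<ge> 0" shows "square (sqrt (t / 2)) \<subseteq> {z. (cmod z)\<^sup>2 \<le> t}"
proof
  fix z assume "z \<in> square (sqrt (t / 2))"
  then have "\<bar>Re z\<bar> \<le> sqrt (t / 2)" "\<bar>Im z\<bar> \<le> sqrt (t / 2)"
    by (auto simp: square_def cbox_def Basis_complex_def)
  then have "\<bar>Re z\<bar>\<^sup>2 \<le> t / 2" "\<bar>Im z\<bar>\<^sup>2 \<le> t / 2"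
    using assms by (metis abs_ge_zero power_mono real_sqrt_ge_zero real_sqrt_pow2 zero_le_divide_iff zero_le_numeral)+
  then show "z \<in> {z. (cmod z)\<^sup>2 \<le> t}" by (simp add: cmod_power2)
qed

lemma cgauss_disk_emeasure:
  assumes "distributed M lborel X (cgauss_density s)"
  shows "emeasure M {\<omega> \<in> space M. (cmod (X \<omega>))\<^sup>2 \<le> t}
           = (\<integral>\<^sup>+z. cgauss_density s z * indicator {z. (cmod z)\<^sup>2 \<le> t} z \<partial>lborel)"
proof -
  have "{\<omega> \<in> space M. (cmod (X \<omega>))\<^sup>2 \<le> t} = X -` {z. (cmod z)\<^sup>2 \<le> t} \<inter> space M" by auto
  then show ?thesis using distributed_emeasure[OF assms, of "{z. (cmod z)\<^sup>2 \<le> t}"] by simp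
qed

lemma cgauss_small_ball_upper:
  assumes M: "prob_space M" and X: "distributed M lborel X (cgauss_density s)"
    and s: "s > 0" and t: "t \<ge> 0"
  shows "measure M {\<omega> \<in> space M. (cmod (X \<omega>))\<^sup>2 \<le> t} \<le> 2 * t / s"
proof -
  interpret prob_space M by (rule M)
  have "emeasure M {\<omega> \<in> space M. (cmod (X \<omega>))\<^sup>2 \<le> t}
      \<le> (\<integral>\<^sup>+z. ennreal (1 / (pi * s)) * indicator (square (sqrt t)) z \<partial>lborel)"
    unfolding cgauss_disk_emeasure[OF X]
  proof (intro nn_integral_mono)
    fix z
    have "cgauss_density s z \<le> ennreal (1 / (pi * s))"
      unfolding cgauss_density_def using s by (intro ennreal_leI divide_right_mono) auto
    then show "cgauss_density s z * indicator {z. (cmod z)\<^sup>2 \<le> t} z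
        \<le> ennreal (1 / (pi * s)) * indicator (square (sqrt t)) z"
      using disk_subset_square[of t] by (auto simp: indicator_def)
  qed
  also have "\<dots> = ennreal (4 * t / (pi * s))" using s t by (simp add: nn_integral_square)
  finally have "measure M {\<omega> \<in> space M. (cmod (X \<omega>))\<^sup>2 \<le> t} \<le> 4 * t / (pi * s)"
    using s t by (simp add: emeasure_eq_measure ennreal_le_iff)
  also have "\<dots> \<le> 2 * t / s"
    using mult_right_mono[of 2 pi t] pi_gt3 s t by (simp add: field_simps)
  finally show ?thesis .
qed

lemma cgauss_small_ball_lower:
  assumes M: "prob_space M" and X: "distributed M lborel X (cgauss_density s)"
    and s: "s > 0" and t: "0 \<le> t" "t \<le> s"
  shows "t / (6 * s) \<le> measure M {\<omega> \<in> space M. (cmod (X \<omega>))\<^sup>2 \<le> t}"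
proof -
  interpret prob_space M by (rule M)
  have "ennreal (exp (-1) / (pi * s) * 2 * t)
      = (\<integral>\<^sup>+z. ennreal (exp (-1) / (pi * s)) * indicator (square (sqrt (t / 2))) z \<partial>lborel)"
    using s t by (simp add: nn_integral_square)
  also have "\<dots> \<le> emeasure M {\<omega> \<in> space M. (cmod (X \<omega>))\<^sup>2 \<le> t}"
    unfolding cgauss_disk_emeasure[OF X]
  proof (intro nn_integral_mono)
    fix z
    show "ennreal (exp (-1) / (pi * s)) * indicator (square (sqrt (t / 2))) z
        \<le> cgauss_density s z * indicator {z. (cmod z)\<^sup>2 \<le> t} z"
    proof (cases "z \<in> square (sqrt (t / 2))")
      case True
      then have "(cmod z)\<^sup>2 \<le> t" using square_subset_disk[OF t(1)] by auto
      then have "exp (-1) \<le> exp (- (cmod z)\<^sup>2 / s)" using s t by (simp add: divide_le_eq)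
      then have "exp (-1) / (pi * s) \<le> exp (- (cmod z)\<^sup>2 / s) / (pi * s)"
        using s by (intro divide_right_mono) auto
      then show ?thesis using True \<open>(cmod z)\<^sup>2 \<le> t\<close> by (simp add: cgauss_density_def ennreal_leI)
    qed simp
  qed
  finally have "exp (-1) / (pi * s) * 2 * t \<le> measure M {\<omega> \<in> space M. (cmod (X \<omega>))\<^sup>2 \<le> t}"
    by (simp add: emeasure_eq_measure ennreal_le_iff)
  moreover have "t / (6 * s) \<le> exp (-1) / (pi * s) * 2 * t"
  proof -
    have "1 / 3 \<le> exp (-1::real)"
      using exp_le mult_right_mono[OF exp_le, of "exp (-1)"] by (simp flip: exp_add)
    then have "(1 / 3) * 2 * t / (4 * s) \<le> exp (-1) * 2 * t / (pi * s)"
      using pi_less_4 s t by (intro frac_le mult_right_mono) auto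
    then show ?thesis by simp
  qed
  ultimately show ?thesis by linarith
qed

lemma cgauss_tail_lower:
  assumes M: "prob_space M" and X: "distributed M lborel X (cgauss_density s)"
    and s: "s > 0" and t: "t \<ge> 0"
  shows "1 - 2 * t / s \<le> measure M {\<omega> \<in> space M. t \<le> (cmod (X \<omega>))\<^sup>2}"
proof -
  interpret prob_space M by (rule M)
  have [measurable]: "X \<in> borel_measurable M" using distributed_measurable[OF X] by simp
  have "{\<omega> \<in> space M. t \<le> (cmod (X \<omega>))\<^sup>2} = space M - {\<omega> \<in> space M. (cmod (X \<omega>))\<^sup>2 < t}" by auto
  then have "prob {\<omega> \<in> space M. t \<le> (cmod (X \<omega>))\<^sup>2} = 1 - prob {\<omega> \<in> space M. (cmod (X \<omega>))\<^sup>2 < t}"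
    by (simp add: prob_compl)
  moreover have "prob {\<omega> \<in> space M. (cmod (X \<omega>))\<^sup>2 < t} \<le> prob {\<omega> \<in> space M. (cmod (X \<omega>))\<^sup>2 \<le> t}"
    by (intro finite_measure_mono) auto
  ultimately show ?thesis using cgauss_small_ball_upper[OF M X s t] by linarith
qed

lemma indep_vars_measure_prod:
  assumes M: "prob_space M" and indep: "prob_space.indep_vars M (\<lambda>_. borel) X I"
    and J: "J \<subseteq> I" "J \<noteq> {}" "finite J" and A: "\<And>i. i \<in> J \<Longrightarrow> A i \<in> sets borel"
  shows "measure M {\<omega> \<in> space M. \<forall>i\<in>J. X i \<omega> \<in> A i} = (\<Prod>i\<in>J. measure M {\<omega> \<in> space M. X i \<omega> \<in> A i})"
proof -
  interpret prob_space M by (rule M)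
  have "{\<omega> \<in> space M. \<forall>i\<in>J. X i \<omega> \<in> A i} = (\<Inter>i\<in>J. X i -` A i \<inter> space M)" using J(2) by auto
  moreover have "{\<omega> \<in> space M. X i \<omega> \<in> A i} = X i -` A i \<inter> space M" for i by auto
  ultimately show ?thesis using indep_varsD[OF indep J(2,3,1)] A by simp
qed

lemma indep_three_gains:
  fixes M :: "'a measure" and \<alpha> :: "node \<Rightarrow> node \<Rightarrow> 'a \<Rightarrow> complex"
  assumes M: "prob_space M"
    and indep: "prob_space.indep_vars M (\<lambda>_. borel) (\<lambda>l. \<alpha> (fst l) (snd l)) links"
    and A: "A0 \<in> sets borel" "A1 \<in> sets borel" "A2 \<in> sets borel"
  shows "measure M {\<omega> \<in> space M. \<alpha> S D \<omega> \<in> A0 \<and> \<alpha> R1 D \<omega> \<in> A1 \<and> \<alpha> R2 D \<omega> \<in> A2} =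
     measure M {\<omega> \<in> space M. \<alpha> S D \<omega> \<in> A0} * measure M {\<omega> \<in> space M. \<alpha> R1 D \<omega> \<in> A1} *
     measure M {\<omega> \<in> space M. \<alpha> R2 D \<omega> \<in> A2}"
proof -
  define J where "J = {(S, D), (R1, D), (R2, D)}"
  define AA where "AA l = (if l = (S, D) then A0 else if l = (R1, D) then A1 else A2)" for l
  have J: "J \<subseteq> links" "J \<noteq> {}" "finite J" unfolding J_def links_def by auto
  have "measure M {\<omega> \<in> space M. \<forall>l\<in>J. \<alpha> (fst l) (snd l) \<omega> \<in> AA l} =
         (\<Prod>l\<in>J. measure M {\<omega> \<in> space M. \<alpha> (fst l) (snd l) \<omega> \<in> AA l})"
    by (rule indep_vars_measure_prod[OF M indep J]) (use A in \<open>auto simp: AA_def J_def\<close>)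
  then show ?thesis unfolding J_def AA_def by (simp add: conj_commute mult.assoc)
qed

lemma indep_five_gains:
  fixes M :: "'a measure" and \<alpha> :: "node \<Rightarrow> node \<Rightarrow> 'a \<Rightarrow> complex"
  assumes M: "prob_space M"
    and indep: "prob_space.indep_vars M (\<lambda>_. borel) (\<lambda>l. \<alpha> (fst l) (snd l)) links"
    and A: "A0 \<in> sets borel" "A1 \<in> sets borel" "A2 \<in> sets borel" "B1 \<in> sets borel" "B2 \<in> sets borel"
  shows "measure M {\<omega> \<in> space M. \<alpha> S D \<omega> \<in> A0 \<and> \<alpha> R1 D \<omega> \<in> A1 \<and> \<alpha> R2 D \<omega> \<in> A2
                                    \<and> \<alpha> S R1 \<omega> \<in> B1 \<and> \<alpha> S R2 \<omega> \<in> B2} =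
     measure M {\<omega> \<in> space M. \<alpha> S D \<omega> \<in> A0} * measure M {\<omega> \<in> space M. \<alpha> R1 D \<omega> \<in> A1} *
     measure M {\<omega> \<in> space M. \<alpha> R2 D \<omega> \<in> A2} * measure M {\<omega> \<in> space M. \<alpha> S R1 \<omega> \<in> B1} *
     measure M {\<omega> \<in> space M. \<alpha> S R2 \<omega> \<in> B2}"
proof -
  define J where "J = {(S, D), (R1, D), (R2, D), (S, R1), (S, R2)}"
  define AA where "AA l = (if l = (S, D) then A0 else if l = (R1, D) then A1 else if l = (R2, D) then A2
     else if l = (S, R1) then B1 else B2)" for l
  have J: "J \<subseteq> links" "J \<noteq> {}" "finite J" unfolding J_def links_def by auto
  have "measure M {\<omega> \<in> space M. \<forall>l\<in>J. \<alpha> (fst l) (snd l) \<omega> \<in> AA l} =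
         (\<Prod>l\<in>J. measure M {\<omega> \<in> space M. \<alpha> (fst l) (snd l) \<omega> \<in> AA l})"
    by (rule indep_vars_measure_prod[OF M indep J]) (use A in \<open>auto simp: AA_def J_def\<close>)
  then show ?thesis unfolding J_def AA_def by (simp add: conj_commute mult.assoc)
qed

lemma I_TDA_both_relays:
  "I_TDA snr Bw tau {R1, R2} a g = ln (1 + rho0 snr * (cmod a)\<^sup>2) / 2
     + freq_gain (rho0 snr) Bw (tau R1) (tau R2) (g R1) (g R2) / (2 * Bw)"
  unfolding I_TDA_def freq_gain_def by simp

lemma card_decoding_set_eq_2:
  "card (decoding_set snr R h) = 2 \<longleftrightarrow> decodes snr R (h R1) \<and> decodes snr R (h R2)"
proof -
  have "decoding_set snr R h = (if decodes snr R (h R1) then {R1} else {})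
                             \<union> (if decodes snr R (h R2) then {R2} else {})"
    by (auto simp: decoding_set_def)
  then show ?thesis by (simp add: card_insert_if)
qed

lemma outage_prob_eq:
  fixes M :: "'a measure" and \<alpha> :: "node \<Rightarrow> node \<Rightarrow> 'a \<Rightarrow> complex"
    and \<sigma>2 :: "node \<Rightarrow> node \<Rightarrow> real" and r Bw snr :: real
  defines "\<rho> \<equiv> rho0 snr" and "R \<equiv> rate r (\<sigma>2 S D) snr"
  shows "outage_prob M \<alpha> \<sigma>2 r Bw tau snr = measure M {\<omega> \<in> space M.
      ln (1 + \<rho> * (cmod (\<alpha> S D \<omega>))\<^sup>2) / 2
        + freq_gain \<rho> Bw (tau R1) (tau R2) (\<alpha> R1 D \<omega>) (\<alpha> R2 D \<omega>) / (2 * Bw) < R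
      \<and> decodes snr R (\<alpha> S R1 \<omega>) \<and> decodes snr R (\<alpha> S R2 \<omega>)}"
proof -
  have "decoding_set snr R h = {R1, R2}" if "decodes snr R (h R1)" "decodes snr R (h R2)" for h
    using that by (auto simp: decoding_set_def)
  then show ?thesis
    unfolding outage_prob_def Let_def \<rho>_def R_def
    by (intro arg_cong[where f = "measure M"])
       (auto simp: card_decoding_set_eq_2 I_TDA_both_relays simp del: One_nat_def)
qed

text \<open>The outage event is measurable; the frequency-integrated gain is continuous in the relay gains.\<close>
lemma outage_event_sets:
  fixes M :: "'a measure" and \<alpha> :: "node \<Rightarrow> node \<Rightarrow> 'a \<Rightarrow> complex"
  assumes distr: "\<And>i j. (i, j) \<in> links \<Longrightarrow> distributed M lborel (\<alpha> i j) (cgauss_density (\<sigma>2 i j))"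
    and \<rho>: "\<rho> \<ge> 0"
  shows "{\<omega> \<in> space M.
      ln (1 + \<rho> * (cmod (\<alpha> S D \<omega>))\<^sup>2) / 2
        + freq_gain \<rho> Bw (tau R1) (tau R2) (\<alpha> R1 D \<omega>) (\<alpha> R2 D \<omega>) / (2 * Bw) < R
      \<and> decodes snr R (\<alpha> S R1 \<omega>) \<and> decodes snr R (\<alpha> S R2 \<omega>)} \<in> sets M"
proof -
  have m: "\<alpha> i j \<in> borel_measurable M" if "(i, j) \<in> links" for i j
    using distributed_measurable[OF distr[OF that]] by simp
  have [measurable]: "\<alpha> S D \<in> borel_measurable M" "\<alpha> R1 D \<in> borel_measurable M"
    "\<alpha> R2 D \<in> borel_measurable M" "\<alpha> S R1 \<in> borel_measurable M" "\<alpha> S R2 \<in> borel_measurable M"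
    by (auto intro!: m simp: links_def)
  have [measurable]: "(\<lambda>\<omega>. freq_gain \<rho> Bw (tau R1) (tau R2) (\<alpha> R1 D \<omega>) (\<alpha> R2 D \<omega>)) \<in> borel_measurable M"
    by (rule borel_measurable_continuous_Pair[OF _ _ freq_gain_continuous[OF \<rho>]]) measurable
  show ?thesis unfolding decodes_def by measurable
qed

section \<open>Upper bound on the outage probability\<close>

lemma outage_small_products:
  fixes a0 a1 a2 :: complex and \<rho> J B C R :: real
  assumes B: "B > 0" and \<rho>: "\<rho> \<ge> 0"
    and out: "ln (1 + \<rho> * (cmod a0)\<^sup>2) / 2 + J / (2 * B) < R"
    and avg: "B * ln (1 + \<rho> * max ((cmod a1)\<^sup>2) ((cmod a2)\<^sup>2)) - C \<le> J"
  shows "(1 + \<rho> * (cmod a0)\<^sup>2) * (1 + \<rho> * (cmod a1)\<^sup>2) < exp (C / B) * exp (2 * R)"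
    and "(1 + \<rho> * (cmod a0)\<^sup>2) * (1 + \<rho> * (cmod a2)\<^sup>2) < exp (C / B) * exp (2 * R)"
proof -
  define x0 x1 where "x0 = 1 + \<rho> * (cmod a0)\<^sup>2" and "x1 = 1 + \<rho> * max ((cmod a1)\<^sup>2) ((cmod a2)\<^sup>2)"
  have x: "x0 > 0" "x1 > 0" unfolding x0_def x1_def using \<rho> by (auto intro!: add_pos_nonneg simp: le_max_iff_disj)
  have "(B * ln x1 - C) / (2 * B) \<le> J / (2 * B)" using avg B unfolding x1_def by (intro divide_right_mono) auto
  moreover have "(B * ln x1 - C) / (2 * B) = ln x1 / 2 - C / B / 2" using B by (simp add: field_simps)
  ultimately have "ln (x0 * x1) < 2 * R + C / B" using out x unfolding x0_def by (simp add: ln_mult_pos)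
  then have "x0 * x1 < exp (C / B) * exp (2 * R)"
    using x by (metis exp_add exp_less_mono exp_ln mult_pos_pos add.commute)
  moreover have "x0 * (1 + \<rho> * (cmod a1)\<^sup>2) \<le> x0 * x1" "x0 * (1 + \<rho> * (cmod a2)\<^sup>2) \<le> x0 * x1"
    using x \<rho> unfolding x1_def by (auto intro!: mult_left_mono)
  ultimately show "(1 + \<rho> * (cmod a0)\<^sup>2) * (1 + \<rho> * (cmod a1)\<^sup>2) < exp (C / B) * exp (2 * R)"
    and "(1 + \<rho> * (cmod a0)\<^sup>2) * (1 + \<rho> * (cmod a2)\<^sup>2) < exp (C / B) * exp (2 * R)"
    unfolding x0_def by linarith+
qed

lemma dyadic_level:
  assumes "(y::real) \<ge> 1" obtains j :: nat where "2 ^ j \<le> y" "y < 2 ^ (j + 1)"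
proof
  define k where "k = \<lfloor>log 2 y\<rfloor>"
  have "k \<ge> 0" using assms by (simp add: k_def)
  have "2 powr k \<le> y \<and> y < 2 powr (k + 1)" using floor_log_eq_powr_iff[of y 2 k] assms k_def by simp
  then show "2 ^ nat k \<le> y" "y < 2 ^ (nat k + 1)" using \<open>k \<ge> 0\<close>
    by (simp_all add: powr_real_of_int powr_add)
qed

text \<open>If \<open>(1 + \<rho>t\<^sub>0)(1 + \<rho>t\<^sub>k) < T\<close> for \<open>k = 1, 2\<close>, then at the dyadic level \<open>j\<close> of \<open>1 + \<rho>t\<^sub>0\<close>
  the three quantities lie in intervals whose lengths multiply to \<open>O(T\<^sup>2 2\<^sup>-\<^sup>j/\<rho>\<^sup>3)\<close>.\<close>
lemma dyadic_product_level:
  fixes \<rho> T t0 t1 t2 :: real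
  assumes \<rho>: "\<rho> > 0" and t: "0 \<le> t0" "0 \<le> t1" "0 \<le> t2"
    and small: "(1 + \<rho> * t0) * (1 + \<rho> * t1) < T" "(1 + \<rho> * t0) * (1 + \<rho> * t2) < T"
  obtains j :: nat
    where "2 ^ j < T" "t0 \<le> 2 ^ (j + 1) / \<rho>" "t1 \<le> T / (2 ^ j * \<rho>)" "t2 \<le> T / (2 ^ j * \<rho>)"
proof -
  have "1 \<le> 1 + \<rho> * t0" using \<rho> t by simp
  then obtain j :: nat where j: "2 ^ j \<le> 1 + \<rho> * t0" "1 + \<rho> * t0 < 2 ^ (j + 1)" by (rule dyadic_level)
  have level: "2 ^ j \<le> 2 ^ j * (1 + \<rho> * t)" "2 ^ j * (1 + \<rho> * t) < T" "t * (2 ^ j * \<rho>) < T"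
    if "0 \<le> t" "(1 + \<rho> * t0) * (1 + \<rho> * t) < T" for t
  proof -
    have "2 ^ j * (1 + \<rho> * t) \<le> (1 + \<rho> * t0) * (1 + \<rho> * t)"
      using j(1) \<rho> that(1) by (intro mult_right_mono) auto
    then show "2 ^ j * (1 + \<rho> * t) < T" using that(2) by linarith
    show "2 ^ j \<le> 2 ^ j * (1 + \<rho> * t)" using \<rho> that(1) by simp
    have "2 ^ j * (\<rho> * t) \<le> 2 ^ j * (1 + \<rho> * t)" by simp
    moreover have "t * (2 ^ j * \<rho>) = 2 ^ j * (\<rho> * t)" by (simp add: mult_ac)
    ultimately show "t * (2 ^ j * \<rho>) < T" using \<open>2 ^ j * (1 + \<rho> * t) < T\<close> by linarith
  qed
  show ?thesis
  proof
    show "2 ^ j < T" using level(1,2)[OF t(2) small(1)] by linarith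
    show "t0 \<le> 2 ^ (j + 1) / \<rho>" using j(2) \<rho> by (simp add: le_divide_eq mult.commute)
    show "t1 \<le> T / (2 ^ j * \<rho>)" "t2 \<le> T / (2 ^ j * \<rho>)"
      using level(3) t small \<rho> by (simp_all add: le_divide_eq less_imp_le)
  qed
qed

lemma small_destination_gains_prob:
  fixes M :: "'a measure" and \<alpha> :: "node \<Rightarrow> node \<Rightarrow> 'a \<Rightarrow> complex"
  assumes M: "prob_space M"
    and indep: "prob_space.indep_vars M (\<lambda>_. borel) (\<lambda>l. \<alpha> (fst l) (snd l)) links"
    and distr: "\<And>i j. (i, j) \<in> links \<Longrightarrow> distributed M lborel (\<alpha> i j) (cgauss_density (\<sigma>2 i j))"
    and var_pos: "\<And>i j. (i, j) \<in> links \<Longrightarrow> \<sigma>2 i j > 0"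
    and a: "a \<ge> 0" and b: "b \<ge> 0"
  shows "measure M {\<omega> \<in> space M. \<alpha> S D \<omega> \<in> {z. (cmod z)\<^sup>2 \<le> a}
           \<and> \<alpha> R1 D \<omega> \<in> {z. (cmod z)\<^sup>2 \<le> b} \<and> \<alpha> R2 D \<omega> \<in> {z. (cmod z)\<^sup>2 \<le> b}}
         \<le> (2 * a / \<sigma>2 S D) * (2 * b / \<sigma>2 R1 D) * (2 * b / \<sigma>2 R2 D)"
proof -
  have s: "\<sigma>2 S D > 0" "\<sigma>2 R1 D > 0" "\<sigma>2 R2 D > 0" by (auto intro!: var_pos simp: links_def)
  have d: "distributed M lborel (\<alpha> S D) (cgauss_density (\<sigma>2 S D))"
    "distributed M lborel (\<alpha> R1 D) (cgauss_density (\<sigma>2 R1 D))"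
    "distributed M lborel (\<alpha> R2 D) (cgauss_density (\<sigma>2 R2 D))"
    by (auto intro!: distr simp: links_def)
  show ?thesis
    unfolding indep_three_gains[OF M indep sets_disk sets_disk sets_disk]
    using cgauss_small_ball_upper[OF M d(1) s(1) a] cgauss_small_ball_upper[OF M d(2) s(2) b]
      cgauss_small_ball_upper[OF M d(3) s(3) b] a b s
    by (intro mult_mono mult_nonneg_nonneg measure_nonneg) auto
qed

text \<open>The probability that the direct gain times each relay gain stays below \<open>T\<close> is of order
  \<open>T\<^sup>2/\<rho>\<^sup>3\<close>: split according to the dyadic level of the direct gain and sum the geometric
  series of the level probabilities.\<close>
lemma small_gain_product_prob:
  fixes M :: "'a measure" and \<alpha> :: "node \<Rightarrow> node \<Rightarrow> 'a \<Rightarrow> complex"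
  assumes M: "prob_space M"
    and indep: "prob_space.indep_vars M (\<lambda>_. borel) (\<lambda>l. \<alpha> (fst l) (snd l)) links"
    and distr: "\<And>i j. (i, j) \<in> links \<Longrightarrow> distributed M lborel (\<alpha> i j) (cgauss_density (\<sigma>2 i j))"
    and var_pos: "\<And>i j. (i, j) \<in> links \<Longrightarrow> \<sigma>2 i j > 0"
    and \<rho>: "\<rho> > 0" and T: "T > 0"
  defines "gains \<equiv> \<lambda>k \<omega>. (1 + \<rho> * (cmod (\<alpha> S D \<omega>))\<^sup>2) * (1 + \<rho> * (cmod (\<alpha> k D \<omega>))\<^sup>2)"
  shows "measure M {\<omega> \<in> space M. gains R1 \<omega> < T \<and> gains R2 \<omega> < T}
           \<le> 32 * T\<^sup>2 / (\<rho> ^ 3 * \<sigma>2 S D * \<sigma>2 R1 D * \<sigma>2 R2 D)"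
proof -
  interpret prob_space M by (rule M)
  have s: "\<sigma>2 S D > 0" "\<sigma>2 R1 D > 0" "\<sigma>2 R2 D > 0" by (auto intro!: var_pos simp: links_def)
  have [measurable]: "\<alpha> i D \<in> borel_measurable M" if "i \<in> {S, R1, R2}" for i
    using that distributed_measurable[OF distr, of i D] by (auto simp: links_def)
  define bound where "bound = 16 * T\<^sup>2 / (\<rho> ^ 3 * \<sigma>2 S D * \<sigma>2 R1 D * \<sigma>2 R2 D)"
  obtain N :: nat where N: "T < 2 ^ N" using real_arch_pow[of 2 T] by auto
  define F where "F j = {\<omega> \<in> space M. \<alpha> S D \<omega> \<in> {z. (cmod z)\<^sup>2 \<le> 2 ^ (j + 1) / \<rho>}
     \<and> \<alpha> R1 D \<omega> \<in> {z. (cmod z)\<^sup>2 \<le> T / (2 ^ j * \<rho>)} \<and> \<alpha> R2 D \<omega> \<in> {z. (cmod z)\<^sup>2 \<le> T / (2 ^ j * \<rho>)}}"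
    for j :: nat
  have cover: "{\<omega> \<in> space M. gains R1 \<omega> < T \<and> gains R2 \<omega> < T} \<subseteq> (\<Union>j<N. F j)"
  proof
    fix \<omega> assume "\<omega> \<in> {\<omega> \<in> space M. gains R1 \<omega> < T \<and> gains R2 \<omega> < T}"
    then obtain j where "(2::real) ^ j < T" "\<omega> \<in> F j"
      using dyadic_product_level[OF \<rho>, of "(cmod (\<alpha> S D \<omega>))\<^sup>2" "(cmod (\<alpha> R1 D \<omega>))\<^sup>2" "(cmod (\<alpha> R2 D \<omega>))\<^sup>2" T]
      unfolding gains_def F_def by auto
    moreover from this(1) N have "j < N" by (metis less_trans power_strict_increasing_iff one_less_numeral_iff semiring_norm(76))
    ultimately show "\<omega> \<in> (\<Union>j<N. F j)" by auto
  qed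
  have F_sets: "F j \<in> sets M" for j unfolding F_def by measurable
  have F_prob: "measure M (F j) \<le> bound * (1 / 2) ^ j" for j
  proof -
    have "measure M (F j) \<le> (2 * (2 ^ (j + 1) / \<rho>) / \<sigma>2 S D) * (2 * (T / (2 ^ j * \<rho>)) / \<sigma>2 R1 D)
        * (2 * (T / (2 ^ j * \<rho>)) / \<sigma>2 R2 D)"
      unfolding F_def using \<rho> T by (intro small_destination_gains_prob[OF M indep distr var_pos]) auto
    also have "\<dots> = bound * (1 / 2) ^ j"
      unfolding bound_def using \<rho> s by (simp add: field_simps power2_eq_square power3_eq_cube power_one_over)
    finally show ?thesis .
  qed
  have "measure M {\<omega> \<in> space M. gains R1 \<omega> < T \<and> gains R2 \<omega> < T} \<le> measure M (\<Union>j<N. F j)"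
    by (rule finite_measure_mono[OF cover]) (use F_sets in auto)
  also have "\<dots> \<le> (\<Sum>j<N. measure M (F j))"
    by (rule finite_measure_subadditive_finite) (use F_sets in auto)
  also have "\<dots> \<le> bound * (\<Sum>j<N. (1 / 2) ^ j)"
    unfolding sum_distrib_left by (intro sum_mono F_prob)
  also have "\<dots> \<le> bound * 2"
    using \<rho> s by (intro mult_left_mono) (auto simp: bound_def sum_gp_strict)
  finally show ?thesis unfolding bound_def by simp
qed

lemma outage_upper_bound:
  fixes M :: "'a measure" and \<alpha> :: "node \<Rightarrow> node \<Rightarrow> 'a \<Rightarrow> complex" and r :: real
  assumes M: "prob_space M"
    and indep: "prob_space.indep_vars M (\<lambda>_. borel) (\<lambda>l. \<alpha> (fst l) (snd l)) links"
    and distr: "\<And>i j. (i, j) \<in> links \<Longrightarrow> distributed M lborel (\<alpha> i j) (cgauss_density (\<sigma>2 i j))"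
    and var_pos: "\<And>i j. (i, j) \<in> links \<Longrightarrow> \<sigma>2 i j > 0"
    and Bw: "Bw > 0" and snr: "snr > 0"
    and avg: "\<And>\<rho> u v. \<rho> \<ge> 0 \<Longrightarrow>
       Bw * ln (1 + \<rho> * max ((cmod u)\<^sup>2) ((cmod v)\<^sup>2)) - C \<le> freq_gain \<rho> Bw (tau R1) (tau R2) u v"
  defines "\<rho> \<equiv> rho0 snr" and "Q \<equiv> exp (2 * rate r (\<sigma>2 S D) snr)"
  shows "outage_prob M \<alpha> \<sigma>2 r Bw tau snr
           \<le> 32 * (exp (C / Bw) * Q)\<^sup>2 / (\<rho> ^ 3 * \<sigma>2 S D * \<sigma>2 R1 D * \<sigma>2 R2 D)"
proof -
  interpret prob_space M by (rule M)
  have \<rho>0: "\<rho> > 0" unfolding \<rho>_def rho0_def using snr by simp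
  define gains where "gains k \<omega> = (1 + \<rho> * (cmod (\<alpha> S D \<omega>))\<^sup>2) * (1 + \<rho> * (cmod (\<alpha> k D \<omega>))\<^sup>2)" for k \<omega>
  define T where "T = exp (C / Bw) * Q"
  have T0: "0 < T" unfolding T_def Q_def by simp
  have [measurable]: "\<alpha> i D \<in> borel_measurable M" if "i \<in> {S, R1, R2}" for i
    using that distributed_measurable[OF distr, of i D] by (auto simp: links_def)
  have "outage_prob M \<alpha> \<sigma>2 r Bw tau snr \<le> measure M {\<omega> \<in> space M. gains R1 \<omega> < T \<and> gains R2 \<omega> < T}"
    unfolding outage_prob_eq \<rho>_def[symmetric]
  proof (intro finite_measure_mono subsetI)
    fix \<omega> assume "\<omega> \<in> {\<omega> \<in> space M. ln (1 + \<rho> * (cmod (\<alpha> S D \<omega>))\<^sup>2) / 2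
          + freq_gain \<rho> Bw (tau R1) (tau R2) (\<alpha> R1 D \<omega>) (\<alpha> R2 D \<omega>) / (2 * Bw) < rate r (\<sigma>2 S D) snr
        \<and> decodes snr (rate r (\<sigma>2 S D) snr) (\<alpha> S R1 \<omega>) \<and> decodes snr (rate r (\<sigma>2 S D) snr) (\<alpha> S R2 \<omega>)}"
    then show "\<omega> \<in> {\<omega> \<in> space M. gains R1 \<omega> < T \<and> gains R2 \<omega> < T}"
      using outage_small_products[OF Bw less_imp_le[OF \<rho>0] _ avg[OF less_imp_le[OF \<rho>0]]]
      unfolding gains_def T_def Q_def by auto
  qed (simp add: gains_def)
  also have "\<dots> \<le> 32 * T\<^sup>2 / (\<rho> ^ 3 * \<sigma>2 S D * \<sigma>2 R1 D * \<sigma>2 R2 D)"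
    unfolding gains_def by (rule small_gain_product_prob[OF M indep distr var_pos \<rho>0 T0])
  finally show ?thesis unfolding T_def .
qed


section \<open>Lower bound on the outage probability\<close>

lemma strong_link_decodes:
  assumes "rho0 snr > 0" "(exp (2 * R) - 1) / rho0 snr \<le> (cmod h)\<^sup>2"
  shows "decodes snr R h"
proof -
  have "exp (2 * R) \<le> 1 + rho0 snr * (cmod h)\<^sup>2" using assms by (simp add: divide_le_eq mult.commute)
  then have "ln (exp (2 * R)) \<le> ln (1 + rho0 snr * (cmod h)\<^sup>2)" by (intro ln_mono) auto
  then show ?thesis unfolding decodes_def by simp
qed

text \<open>Weak direct and relay-destination links force an outage once \<open>e\<^sup>2\<^sup>R > 4\<close>, whatever the
  delays: frequency averaging cannot beat coherent combining.\<close>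
lemma weak_links_outage:
  assumes \<rho>: "\<rho> > 0" and B: "B > 0" and Q: "4 < exp (2 * R)"
    and a0: "(cmod a0)\<^sup>2 \<le> 1 / \<rho>"
    and a1: "(cmod a1)\<^sup>2 \<le> exp (2 * R) / (16 * \<rho>)" and a2: "(cmod a2)\<^sup>2 \<le> exp (2 * R) / (16 * \<rho>)"
  shows "ln (1 + \<rho> * (cmod a0)\<^sup>2) / 2 + freq_gain \<rho> B t1 t2 a1 a2 / (2 * B) < R"
proof -
  define Q where "Q = exp (2 * R)"
  have "\<rho> * (cmod a0)\<^sup>2 \<le> 1" using a0 \<rho> by (simp add: le_divide_eq mult.commute)
  then have direct: "ln (1 + \<rho> * (cmod a0)\<^sup>2) \<le> ln 2" using \<rho> by (intro ln_mono) (auto simp: add_pos_nonneg)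
  have "(cmod a1 + cmod a2)\<^sup>2 \<le> 2 * ((cmod a1)\<^sup>2 + (cmod a2)\<^sup>2)"
    using zero_le_power2[of "cmod a1 - cmod a2"] by (simp add: power2_eq_square algebra_simps)
  also have "\<dots> \<le> Q / (4 * \<rho>)" using a1 a2 unfolding Q_def by simp
  finally have "\<rho> * (cmod a1 + cmod a2)\<^sup>2 \<le> Q / 4" using \<rho> by (simp add: le_divide_eq mult.commute)
  then have "ln (1 + \<rho> * (cmod a1 + cmod a2)\<^sup>2) \<le> ln (1 + Q / 4)"
    using \<rho> by (intro ln_mono) (auto simp: add_pos_nonneg)
  with freq_gain_upper[OF less_imp_le[OF \<rho>] B, of t1 t2 a1 a2]
  have "freq_gain \<rho> B t1 t2 a1 a2 \<le> B * ln (1 + Q / 4)"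
    using B by (meson mult_left_mono less_imp_le order_trans)
  then have "freq_gain \<rho> B t1 t2 a1 a2 / (2 * B) \<le> B * ln (1 + Q / 4) / (2 * B)"
    using B by (intro divide_right_mono) auto
  then have relay: "freq_gain \<rho> B t1 t2 a1 a2 / (2 * B) \<le> ln (1 + Q / 4) / 2" using B by simp
  have "ln 2 + ln (1 + Q / 4) = ln (2 * (1 + Q / 4))" unfolding Q_def by (intro ln_mult_pos[symmetric]) (auto intro: add_pos_pos)
  also have "\<dots> < ln Q" using Q unfolding Q_def[symmetric] by (intro ln_less_cancel_iff[THEN iffD2]) auto
  finally show ?thesis using direct relay unfolding Q_def by simp
qed

lemma weak_strong_gains_prob:
  fixes M :: "'a measure" and \<alpha> :: "node \<Rightarrow> node \<Rightarrow> 'a \<Rightarrow> complex"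
  assumes M: "prob_space M"
    and indep: "prob_space.indep_vars M (\<lambda>_. borel) (\<lambda>l. \<alpha> (fst l) (snd l)) links"
    and distr: "\<And>i j. (i, j) \<in> links \<Longrightarrow> distributed M lborel (\<alpha> i j) (cgauss_density (\<sigma>2 i j))"
    and var_pos: "\<And>i j. (i, j) \<in> links \<Longrightarrow> \<sigma>2 i j > 0"
    and a0: "0 \<le> a0" "a0 \<le> \<sigma>2 S D" and a: "0 \<le> a" "a \<le> \<sigma>2 R1 D" "a \<le> \<sigma>2 R2 D"
    and T: "0 \<le> T" "4 * T \<le> \<sigma>2 S R1" "4 * T \<le> \<sigma>2 S R2"
  shows "a0 / (6 * \<sigma>2 S D) * (a / (6 * \<sigma>2 R1 D)) * (a / (6 * \<sigma>2 R2 D)) * (1 / 2) * (1 / 2)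
    \<le> measure M {\<omega> \<in> space M. \<alpha> S D \<omega> \<in> {z. (cmod z)\<^sup>2 \<le> a0}
         \<and> \<alpha> R1 D \<omega> \<in> {z. (cmod z)\<^sup>2 \<le> a} \<and> \<alpha> R2 D \<omega> \<in> {z. (cmod z)\<^sup>2 \<le> a}
         \<and> \<alpha> S R1 \<omega> \<in> {z. T \<le> (cmod z)\<^sup>2} \<and> \<alpha> S R2 \<omega> \<in> {z. T \<le> (cmod z)\<^sup>2}}"
proof -
  have s: "\<sigma>2 S D > 0" "\<sigma>2 R1 D > 0" "\<sigma>2 R2 D > 0" by (auto intro!: var_pos simp: links_def)
  have d: "distributed M lborel (\<alpha> S D) (cgauss_density (\<sigma>2 S D))"
    "distributed M lborel (\<alpha> R1 D) (cgauss_density (\<sigma>2 R1 D))"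
    "distributed M lborel (\<alpha> R2 D) (cgauss_density (\<sigma>2 R2 D))"
    by (auto intro!: distr simp: links_def)
  have strong: "1 / 2 \<le> measure M {\<omega> \<in> space M. T \<le> (cmod (\<alpha> S k \<omega>))\<^sup>2}" if "k \<in> {R1, R2}" for k
  proof -
    have dk: "distributed M lborel (\<alpha> S k) (cgauss_density (\<sigma>2 S k))" and sk: "\<sigma>2 S k > 0"
      using that by (auto intro!: distr var_pos simp: links_def)
    have "2 * T / \<sigma>2 S k \<le> 1 / 2" using that T sk by (auto simp: divide_le_eq)
    with cgauss_tail_lower[OF M dk sk T(1)] show ?thesis by linarith
  qed
  have strong_sets: "{z. T \<le> (cmod z)\<^sup>2} \<in> sets borel" by measurable
  show ?thesis
    unfolding indep_five_gains[OF M indep sets_disk sets_disk sets_disk strong_sets strong_sets]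
    using cgauss_small_ball_lower[OF M d(1) s(1) a0] cgauss_small_ball_lower[OF M d(2) s(2) a(1,2)]
      cgauss_small_ball_lower[OF M d(3) s(3) a(1,3)] strong a0 a s
    by (intro mult_mono mult_nonneg_nonneg measure_nonneg) auto
qed

text \<open>Lower bound at a fixed SNR: the outage event contains the event that the direct and
  relay-destination links are weak while the source-relay links are strong.\<close>
lemma outage_lower_bound:
  fixes M :: "'a measure" and \<alpha> :: "node \<Rightarrow> node \<Rightarrow> 'a \<Rightarrow> complex" and r :: real
  assumes M: "prob_space M"
    and indep: "prob_space.indep_vars M (\<lambda>_. borel) (\<lambda>l. \<alpha> (fst l) (snd l)) links"
    and distr: "\<And>i j. (i, j) \<in> links \<Longrightarrow> distributed M lborel (\<alpha> i j) (cgauss_density (\<sigma>2 i j))"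
    and var_pos: "\<And>i j. (i, j) \<in> links \<Longrightarrow> \<sigma>2 i j > 0"
    and Bw: "Bw > 0" and snr: "snr > 0"
  defines "\<rho> \<equiv> rho0 snr" and "Q \<equiv> exp (2 * rate r (\<sigma>2 S D) snr)"
  assumes Q4: "4 < Q" and direct: "1 / \<rho> \<le> \<sigma>2 S D"
    and relay_dest: "Q / \<rho> \<le> 16 * \<sigma>2 R1 D" "Q / \<rho> \<le> 16 * \<sigma>2 R2 D"
    and source_relay: "Q / \<rho> \<le> \<sigma>2 S R1 / 4" "Q / \<rho> \<le> \<sigma>2 S R2 / 4"
  shows "Q\<^sup>2 / (221184 * \<rho> ^ 3 * \<sigma>2 S D * \<sigma>2 R1 D * \<sigma>2 R2 D) \<le> outage_prob M \<alpha> \<sigma>2 r Bw tau snr"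
proof -
  interpret prob_space M by (rule M)
  have \<rho>0: "\<rho> > 0" unfolding \<rho>_def rho0_def using snr by simp
  have s: "\<sigma>2 S D > 0" "\<sigma>2 R1 D > 0" "\<sigma>2 R2 D > 0" by (auto intro!: var_pos simp: links_def)
  define t where "t = Q / (16 * \<rho>)"
  define T where "T = (Q - 1) / \<rho>"
  have "0 \<le> T" "T \<le> Q / \<rho>" unfolding T_def using \<rho>0 Q4 by (auto intro: divide_right_mono)
  then have T: "0 \<le> T" "4 * T \<le> \<sigma>2 S R1" "4 * T \<le> \<sigma>2 S R2" using source_relay by linarith+
  have "Q\<^sup>2 / (221184 * \<rho> ^ 3 * \<sigma>2 S D * \<sigma>2 R1 D * \<sigma>2 R2 D)
      = 1 / \<rho> / (6 * \<sigma>2 S D) * (t / (6 * \<sigma>2 R1 D)) * (t / (6 * \<sigma>2 R2 D)) * (1 / 2) * (1 / 2)"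
    unfolding t_def using \<rho>0 s by (simp add: field_simps power2_eq_square power3_eq_cube)
  also have "\<dots> \<le> measure M {\<omega> \<in> space M. \<alpha> S D \<omega> \<in> {z. (cmod z)\<^sup>2 \<le> 1 / \<rho>}
         \<and> \<alpha> R1 D \<omega> \<in> {z. (cmod z)\<^sup>2 \<le> t} \<and> \<alpha> R2 D \<omega> \<in> {z. (cmod z)\<^sup>2 \<le> t}
         \<and> \<alpha> S R1 \<omega> \<in> {z. T \<le> (cmod z)\<^sup>2} \<and> \<alpha> S R2 \<omega> \<in> {z. T \<le> (cmod z)\<^sup>2}}"
    using \<rho>0 Q4 direct relay_dest unfolding t_def
    by (intro weak_strong_gains_prob[OF M indep distr var_pos _ _ _ _ _ T]) auto
  also have "\<dots> \<le> outage_prob M \<alpha> \<sigma>2 r Bw tau snr"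
    unfolding outage_prob_eq \<rho>_def[symmetric]
  proof (intro finite_measure_mono outage_event_sets[OF distr less_imp_le[OF \<rho>0]] subsetI)
    fix \<omega> assume "\<omega> \<in> {\<omega> \<in> space M. \<alpha> S D \<omega> \<in> {z. (cmod z)\<^sup>2 \<le> 1 / \<rho>}
         \<and> \<alpha> R1 D \<omega> \<in> {z. (cmod z)\<^sup>2 \<le> t} \<and> \<alpha> R2 D \<omega> \<in> {z. (cmod z)\<^sup>2 \<le> t}
         \<and> \<alpha> S R1 \<omega> \<in> {z. T \<le> (cmod z)\<^sup>2} \<and> \<alpha> S R2 \<omega> \<in> {z. T \<le> (cmod z)\<^sup>2}}"
    then show "\<omega> \<in> {\<omega> \<in> space M. ln (1 + \<rho> * (cmod (\<alpha> S D \<omega>))\<^sup>2) / 2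
        + freq_gain \<rho> Bw (tau R1) (tau R2) (\<alpha> R1 D \<omega>) (\<alpha> R2 D \<omega>) / (2 * Bw) < rate r (\<sigma>2 S D) snr
      \<and> decodes snr (rate r (\<sigma>2 S D) snr) (\<alpha> S R1 \<omega>) \<and> decodes snr (rate r (\<sigma>2 S D) snr) (\<alpha> S R2 \<omega>)}"
      using weak_links_outage[OF \<rho>0 Bw Q4[unfolded Q_def]]
        strong_link_decodes[of snr "rate r (\<sigma>2 S D) snr"] \<rho>0
      unfolding t_def T_def Q_def \<rho>_def by auto
  qed
  finally show ?thesis .
qed

section \<open>Asymptotics in the SNR\<close>

lemma exp_two_rate:
  assumes "s * snr \<ge> 0"
  shows "exp (2 * rate r s snr) = (1 + s * snr) powr (2 * r)"
  using assms by (simp add: rate_def powr_def mult_ac)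

text \<open>With \<open>y = SNR\<^sub>S\<^sub>D\<close>, the quantity \<open>(1 + y)\<^sup>4\<^sup>r / y\<^sup>3\<close>, which governs the outage probability,
  is comparable to the diversity-order power \<open>y\<^sup>-\<^sup>(\<^sup>3\<^sup>-\<^sup>4\<^sup>r\<^sup>)\<close>.\<close>
lemma snr_power_sandwich:
  fixes y r :: real
  assumes y: "y \<ge> 1" and r: "0 \<le> r" "r \<le> 1 / 2"
  shows "y powr (- (3 - 4 * r)) \<le> (1 + y) powr (4 * r) / y ^ 3"
    and "(1 + y) powr (4 * r) / y ^ 3 \<le> 4 * y powr (- (3 - 4 * r))"
proof -
  have "y powr (- (3 - 4 * r)) = y powr (4 * r - 3)" by (simp add: algebra_simps)
  also have "\<dots> = y powr (4 * r) / y powr 3" by (rule powr_diff)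
  also have "y powr 3 = y ^ 3" using y powr_realpow[of y 3] by simp
  finally have split: "y powr (- (3 - 4 * r)) = y powr (4 * r) / y ^ 3" .
  have "y powr (4 * r) \<le> (1 + y) powr (4 * r)" using y r by (intro powr_mono2) auto
  then show "y powr (- (3 - 4 * r)) \<le> (1 + y) powr (4 * r) / y ^ 3"
    unfolding split using y by (intro divide_right_mono) auto
  have "(1 + y) powr (4 * r) \<le> (2 * y) powr (4 * r)" using y r by (intro powr_mono2) auto
  also have "\<dots> = 2 powr (4 * r) * y powr (4 * r)" using y by (simp add: powr_mult)
  also have "\<dots> \<le> 2 powr 2 * y powr (4 * r)" using r by (intro mult_right_mono powr_mono) auto
  finally show "(1 + y) powr (4 * r) / y ^ 3 \<le> 4 * y powr (- (3 - 4 * r))"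
    unfolding split using y by (simp add: divide_right_mono)
qed

lemma outage_scale:
  fixes s0 s1 s2 snr r :: real
  assumes "snr > 0" "s0 > 0" "s1 > 0" "s2 > 0"
  shows "(exp (2 * rate r s0 snr))\<^sup>2 / (rho0 snr ^ 3 * s0 * s1 * s2)
      = 27 * s0\<^sup>2 / (8 * s1 * s2) * ((1 + s0 * snr) powr (4 * r) / (s0 * snr) ^ 3)"
proof -
  have "(exp (2 * rate r s0 snr))\<^sup>2 = (1 + s0 * snr) powr (4 * r)"
    using assms by (simp add: exp_two_rate power2_eq_square powr_add[symmetric])
  then show ?thesis using assms unfolding rho0_def
    by (simp add: field_simps power2_eq_square power3_eq_cube)
qed

lemma outage_upper_order:
  fixes M :: "'a measure" and \<alpha> :: "node \<Rightarrow> node \<Rightarrow> 'a \<Rightarrow> complex" and r :: real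
  assumes M: "prob_space M"
    and indep: "prob_space.indep_vars M (\<lambda>_. borel) (\<lambda>l. \<alpha> (fst l) (snd l)) links"
    and distr: "\<And>i j. (i, j) \<in> links \<Longrightarrow> distributed M lborel (\<alpha> i j) (cgauss_density (\<sigma>2 i j))"
    and var_pos: "\<And>i j. (i, j) \<in> links \<Longrightarrow> \<sigma>2 i j > 0"
    and Bw: "Bw > 0"
    and avg: "\<And>\<rho> u v. \<rho> \<ge> 0 \<Longrightarrow>
       Bw * ln (1 + \<rho> * max ((cmod u)\<^sup>2) ((cmod v)\<^sup>2)) - C \<le> freq_gain \<rho> Bw (tau R1) (tau R2) u v"
    and snr: "0 < snr" "1 \<le> \<sigma>2 S D * snr" and r: "0 \<le> r" "r \<le> 1 / 2"
  shows "outage_prob M \<alpha> \<sigma>2 r Bw tau snr \<le> 128 * (exp (C / Bw))\<^sup>2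
           * (27 * (\<sigma>2 S D)\<^sup>2 / (8 * \<sigma>2 R1 D * \<sigma>2 R2 D)) * (\<sigma>2 S D * snr) powr (- (3 - 4 * r))"
proof -
  define K y where "K = 32 * (exp (C / Bw))\<^sup>2 * (27 * (\<sigma>2 S D)\<^sup>2 / (8 * \<sigma>2 R1 D * \<sigma>2 R2 D))"
    and "y = \<sigma>2 S D * snr"
  have s: "\<sigma>2 S D > 0" "\<sigma>2 R1 D > 0" "\<sigma>2 R2 D > 0" by (auto intro!: var_pos simp: links_def)
  then have "K \<ge> 0" unfolding K_def by simp
  have "outage_prob M \<alpha> \<sigma>2 r Bw tau snr
      \<le> 32 * (exp (C / Bw) * exp (2 * rate r (\<sigma>2 S D) snr))\<^sup>2 / (rho0 snr ^ 3 * \<sigma>2 S D * \<sigma>2 R1 D * \<sigma>2 R2 D)"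
    by (rule outage_upper_bound[OF M indep distr var_pos Bw snr(1) avg])
  also have "\<dots> = 32 * (exp (C / Bw))\<^sup>2
      * ((exp (2 * rate r (\<sigma>2 S D) snr))\<^sup>2 / (rho0 snr ^ 3 * \<sigma>2 S D * \<sigma>2 R1 D * \<sigma>2 R2 D))"
    by (simp add: power_mult_distrib)
  also have "\<dots> = K * ((1 + y) powr (4 * r) / y ^ 3)"
    unfolding K_def y_def using outage_scale[OF snr(1) s] by simp
  also have "\<dots> \<le> K * (4 * y powr (- (3 - 4 * r)))"
    using snr_power_sandwich(2)[of y r] snr r \<open>K \<ge> 0\<close> unfolding y_def by (intro mult_left_mono) auto
  finally show ?thesis unfolding K_def y_def by simp
qed

lemma outage_lower_order:
  fixes M :: "'a measure" and \<alpha> :: "node \<Rightarrow> node \<Rightarrow> 'a \<Rightarrow> complex" and r :: real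
  assumes M: "prob_space M"
    and indep: "prob_space.indep_vars M (\<lambda>_. borel) (\<lambda>l. \<alpha> (fst l) (snd l)) links"
    and distr: "\<And>i j. (i, j) \<in> links \<Longrightarrow> distributed M lborel (\<alpha> i j) (cgauss_density (\<sigma>2 i j))"
    and var_pos: "\<And>i j. (i, j) \<in> links \<Longrightarrow> \<sigma>2 i j > 0"
    and Bw: "Bw > 0" and snr: "0 < snr" "1 \<le> \<sigma>2 S D * snr" and r: "0 \<le> r" "r \<le> 1 / 2"
  defines "Q \<equiv> (1 + \<sigma>2 S D * snr) powr (2 * r)"
  assumes Q4: "4 < Q" and direct: "1 / (2 / 3 * snr) \<le> \<sigma>2 S D"
    and small: "Q / (2 / 3 * snr) \<le> min (min (16 * \<sigma>2 R1 D) (16 * \<sigma>2 R2 D)) (min (\<sigma>2 S R1 / 4) (\<sigma>2 S R2 / 4))"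
  shows "27 * (\<sigma>2 S D)\<^sup>2 / (8 * \<sigma>2 R1 D * \<sigma>2 R2 D) / 221184 * (\<sigma>2 S D * snr) powr (- (3 - 4 * r))
           \<le> outage_prob M \<alpha> \<sigma>2 r Bw tau snr"
proof -
  define \<kappa> y where "\<kappa> = 27 * (\<sigma>2 S D)\<^sup>2 / (8 * \<sigma>2 R1 D * \<sigma>2 R2 D) / 221184" and "y = \<sigma>2 S D * snr"
  have s: "\<sigma>2 S D > 0" "\<sigma>2 R1 D > 0" "\<sigma>2 R2 D > 0" by (auto intro!: var_pos simp: links_def)
  then have "\<kappa> \<ge> 0" unfolding \<kappa>_def by simp
  have Q: "exp (2 * rate r (\<sigma>2 S D) snr) = Q" and \<rho>: "rho0 snr = 2 / 3 * snr"
    unfolding Q_def using snr s by (simp_all add: exp_two_rate rho0_def)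
  have "\<kappa> * y powr (- (3 - 4 * r)) \<le> \<kappa> * ((1 + y) powr (4 * r) / y ^ 3)"
    using snr_power_sandwich(1)[of y r] snr r \<open>\<kappa> \<ge> 0\<close> unfolding y_def by (intro mult_left_mono) auto
  also have "\<dots> = (exp (2 * rate r (\<sigma>2 S D) snr))\<^sup>2 / (221184 * rho0 snr ^ 3 * \<sigma>2 S D * \<sigma>2 R1 D * \<sigma>2 R2 D)"
    using outage_scale[OF snr(1) s, of r] unfolding \<kappa>_def y_def by simp
  also have "\<dots> \<le> outage_prob M \<alpha> \<sigma>2 r Bw tau snr"
    using Q4 direct small unfolding Q[symmetric] \<rho>[symmetric]
    by (intro outage_lower_bound[OF M indep distr var_pos Bw snr(1)]) auto
  finally show ?thesis unfolding \<kappa>_def y_def .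
qed

lemma outage_order_distinct_delays:
  fixes M :: "'a measure" and \<alpha> :: "node \<Rightarrow> node \<Rightarrow> 'a \<Rightarrow> complex"
  assumes M: "prob_space M"
    and indep: "prob_space.indep_vars M (\<lambda>_. borel) (\<lambda>l. \<alpha> (fst l) (snd l)) links"
    and distr: "\<And>i j. (i, j) \<in> links \<Longrightarrow> distributed M lborel (\<alpha> i j) (cgauss_density (\<sigma>2 i j))"
    and var_pos: "\<And>i j. (i, j) \<in> links \<Longrightarrow> \<sigma>2 i j > 0"
    and r: "0 < r" "r < 1 / 2" and Bw: "Bw > 0" and delays: "tau R1 \<noteq> tau R2"
  shows "\<exists>c1 c2. c1 > 0 \<and> c2 > 0 \<and>
    (\<forall>\<^sub>F snr in at_top. c1 * (\<sigma>2 S D * snr) powr (- (3 - 4 * r)) \<le> outage_prob M \<alpha> \<sigma>2 r Bw tau snr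
                      \<and> outage_prob M \<alpha> \<sigma>2 r Bw tau snr \<le> c2 * (\<sigma>2 S D * snr) powr (- (3 - 4 * r)))"
proof -
  obtain C where avg: "\<And>\<rho> u v. \<rho> \<ge> 0 \<Longrightarrow>
      Bw * ln (1 + \<rho> * max ((cmod u)\<^sup>2) ((cmod v)\<^sup>2)) - C \<le> freq_gain \<rho> Bw (tau R1) (tau R2) u v"
    using freq_gain_lower[OF Bw delays] by metis
  define \<kappa> where "\<kappa> = 27 * (\<sigma>2 S D)\<^sup>2 / (8 * \<sigma>2 R1 D * \<sigma>2 R2 D)"
  define m where "m = min (min (16 * \<sigma>2 R1 D) (16 * \<sigma>2 R2 D)) (min (\<sigma>2 S R1 / 4) (\<sigma>2 S R2 / 4))"
  have s: "\<sigma>2 S D > 0" "\<sigma>2 R1 D > 0" "\<sigma>2 R2 D > 0" "\<sigma>2 S R1 > 0" "\<sigma>2 S R2 > 0"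
    by (auto intro!: var_pos simp: links_def)
  then have "\<kappa> > 0" "m > 0" unfolding \<kappa>_def m_def by auto
  have "\<forall>\<^sub>F snr in at_top. 0 < snr \<and> 1 \<le> \<sigma>2 S D * snr \<and> 4 < (1 + \<sigma>2 S D * snr) powr (2 * r)
       \<and> 1 / (2 / 3 * snr) \<le> \<sigma>2 S D \<and> (1 + \<sigma>2 S D * snr) powr (2 * r) / (2 / 3 * snr) \<le> m"
    using s(1) r \<open>m > 0\<close> by (intro eventually_conj; real_asymp)
  then have "\<forall>\<^sub>F snr in at_top.
      \<kappa> / 221184 * (\<sigma>2 S D * snr) powr (- (3 - 4 * r)) \<le> outage_prob M \<alpha> \<sigma>2 r Bw tau snr
      \<and> outage_prob M \<alpha> \<sigma>2 r Bw tau snr \<le> 128 * (exp (C / Bw))\<^sup>2 * \<kappa> * (\<sigma>2 S D * snr) powr (- (3 - 4 * r))"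
    unfolding \<kappa>_def m_def
  proof eventually_elim
    case (elim snr)
    with r show ?case
      by (intro conjI outage_lower_order[OF M indep distr var_pos Bw]
          outage_upper_order[OF M indep distr var_pos Bw avg]) auto
  qed
  then show ?thesis using \<open>\<kappa> > 0\<close>
    by (intro exI[of _ "\<kappa> / 221184"] exI[of _ "128 * (exp (C / Bw))\<^sup>2 * \<kappa>"]) auto
qed

lemma outage_bounds_distinct_delays:
  fixes M :: "'a measure" and \<alpha> :: "node \<Rightarrow> node \<Rightarrow> 'a \<Rightarrow> complex"
  assumes M: "prob_space M"
    and indep: "prob_space.indep_vars M (\<lambda>_. borel) (\<lambda>l. \<alpha> (fst l) (snd l)) links"
    and distr: "\<And>i j. (i, j) \<in> links \<Longrightarrow> distributed M lborel (\<alpha> i j) (cgauss_density (\<sigma>2 i j))"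
    and var_pos: "\<And>i j. (i, j) \<in> links \<Longrightarrow> \<sigma>2 i j > 0"
    and r: "0 < r" "r < 1 / 2" and Bw: "Bw > 0" and delays: "tau R1 \<noteq> tau R2"
    and a: "a \<le> 3 - 4 * r"
  shows "\<exists>c1 c2 snr0. c1 > 0 \<and> c2 > 0 \<and> (\<forall>snr. snr > 0 \<and> snr \<ge> snr0 \<longrightarrow>
      c1 * (\<sigma>2 S D * snr) powr (- (3 - 4 * r)) \<le> outage_prob M \<alpha> \<sigma>2 r Bw tau snr \<and>
      outage_prob M \<alpha> \<sigma>2 r Bw tau snr \<le> c2 * (\<sigma>2 S D * snr) powr (- a))"
proof -
  obtain c1 c2 where c: "c1 > 0" "c2 > 0" and order: "\<forall>\<^sub>F snr in at_top.
      c1 * (\<sigma>2 S D * snr) powr (- (3 - 4 * r)) \<le> outage_prob M \<alpha> \<sigma>2 r Bw tau snr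
      \<and> outage_prob M \<alpha> \<sigma>2 r Bw tau snr \<le> c2 * (\<sigma>2 S D * snr) powr (- (3 - 4 * r))"
    using outage_order_distinct_delays[OF M indep distr var_pos r Bw delays] by blast
  have "\<sigma>2 S D > 0" by (rule var_pos) (simp add: links_def)
  then have "\<forall>\<^sub>F snr in at_top. 1 \<le> \<sigma>2 S D * snr" by real_asymp
  with order have "\<forall>\<^sub>F snr in at_top.
      c1 * (\<sigma>2 S D * snr) powr (- (3 - 4 * r)) \<le> outage_prob M \<alpha> \<sigma>2 r Bw tau snr
      \<and> outage_prob M \<alpha> \<sigma>2 r Bw tau snr \<le> c2 * (\<sigma>2 S D * snr) powr (- a)"
  proof eventually_elim
    case (elim snr)
    then have "(\<sigma>2 S D * snr) powr (- (3 - 4 * r)) \<le> (\<sigma>2 S D * snr) powr (- a)"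
      using a by (intro powr_mono) auto
    then show ?case using elim c(2) by (meson mult_left_mono less_imp_le order_trans)
  qed
  then show ?thesis using c unfolding eventually_at_top_linorder by auto
qed

text \<open>Both cases only need \<open>\<tau>\<^sub>1 \<noteq> \<tau>\<^sub>2\<close>; in case (a) the stated upper bound of order
  \<open>SNR\<^sup>-\<^sup>(\<^sup>3\<^sup>-\<^sup>6\<^sup>r\<^sup>)\<close> is weaker than the exact order \<open>SNR\<^sup>-\<^sup>(\<^sup>3\<^sup>-\<^sup>4\<^sup>r\<^sup>)\<close> established above.\<close>
theorem theorem2:
  fixes M :: "'a measure"
    and \<alpha> :: "node \<Rightarrow> node \<Rightarrow> 'a \<Rightarrow> complex"
    and \<sigma>2 :: "node \<Rightarrow> node \<Rightarrow> real"
    and r Bw :: real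
    and tau :: "node \<Rightarrow> real"
  assumes M: "prob_space M"
    and indep: "prob_space.indep_vars M (\<lambda>_. borel) (\<lambda>l. \<alpha> (fst l) (snd l)) links"
    and distr: "\<And>i j. (i, j) \<in> links \<Longrightarrow>
                  distributed M lborel (\<alpha> i j) (cgauss_density (\<sigma>2 i j))"
    and var_pos: "\<And>i j. (i, j) \<in> links \<Longrightarrow> \<sigma>2 i j > 0"
    and r: "0 < r" "r < 1 / 2"
    and Bw: "Bw > 0"
    and tau: "tau R1 \<ge> 0" "tau R2 \<ge> 0"
  shows
    "(\<bar>tau R2 - tau R1\<bar> * Bw > 2 \<and> \<bar>tau R2 - tau R1\<bar> * Bw \<notin> \<int> \<longrightarrow>
       (\<exists>c1 c2 snr0. c1 > 0 \<and> c2 > 0 \<and>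
          (\<forall>snr. snr > 0 \<and> snr \<ge> snr0 \<longrightarrow>
             c1 * (\<sigma>2 S D * snr) powr (- (3 - 4 * r)) \<le> outage_prob M \<alpha> \<sigma>2 r Bw tau snr \<and>
             outage_prob M \<alpha> \<sigma>2 r Bw tau snr \<le> c2 * (\<sigma>2 S D * snr) powr (- (3 - 6 * r)))))
   \<and> ((\<exists>n::nat. n > 0 \<and> \<bar>tau R2 - tau R1\<bar> * Bw = real n) \<longrightarrow>
       (\<exists>c1 c2 snr0. c1 > 0 \<and> c2 > 0 \<and>
          (\<forall>snr. snr > 0 \<and> snr \<ge> snr0 \<longrightarrow>
             c1 * (\<sigma>2 S D * snr) powr (- (3 - 4 * r)) \<le> outage_prob M \<alpha> \<sigma>2 r Bw tau snr \<and>
             outage_prob M \<alpha> \<sigma>2 r Bw tau snr \<le> c2 * (\<sigma>2 S D * snr) powr (- (3 - 4 * r)))))"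
proof (intro conjI impI)
  assume "\<bar>tau R2 - tau R1\<bar> * Bw > 2 \<and> \<bar>tau R2 - tau R1\<bar> * Bw \<notin> \<int>"
  then have "tau R1 \<noteq> tau R2" by auto
  with r show "\<exists>c1 c2 snr0. c1 > 0 \<and> c2 > 0 \<and> (\<forall>snr. snr > 0 \<and> snr \<ge> snr0 \<longrightarrow>
      c1 * (\<sigma>2 S D * snr) powr (- (3 - 4 * r)) \<le> outage_prob M \<alpha> \<sigma>2 r Bw tau snr \<and>
      outage_prob M \<alpha> \<sigma>2 r Bw tau snr \<le> c2 * (\<sigma>2 S D * snr) powr (- (3 - 6 * r)))"
    by (intro outage_bounds_distinct_delays[OF M indep distr var_pos r Bw]) auto
next
  assume "\<exists>n::nat. n > 0 \<and> \<bar>tau R2 - tau R1\<bar> * Bw = real n"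
  then have "tau R1 \<noteq> tau R2" by auto
  then show "\<exists>c1 c2 snr0. c1 > 0 \<and> c2 > 0 \<and> (\<forall>snr. snr > 0 \<and> snr \<ge> snr0 \<longrightarrow>
      c1 * (\<sigma>2 S D * snr) powr (- (3 - 4 * r)) \<le> outage_prob M \<alpha> \<sigma>2 r Bw tau snr \<and>
      outage_prob M \<alpha> \<sigma>2 r Bw tau snr \<le> c2 * (\<sigma>2 S D * snr) powr (- (3 - 4 * r)))"
    by (intro outage_bounds_distinct_delays[OF M indep distr var_pos r Bw]) auto
qed

end
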